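(* Let $q$ be an odd prime power, let $d\geq 2$ be an integer, let $\mathcal{E}\subseteq\mathbb{F}_q^d$, and let $k\geq2$ be an integer. \begin{itemize} \item If $q\geq5$, $d\geq2$ is even, $r\in\mathbb{F}_q^*$ and $|\mathcal{E}|\geq\left(31+10\binom{k}{2}\right)q^{d/2}$, then $\mathcal{E}$ contains a pair of $k$-stars with dilation ratio $r$. \item If $d\geq3$ is odd, $r\in\mathbb{F}_q^+$ and $|\mathcal{E}|\geq\left(4+\sqrt3\binom{k}{2}\right)q^{d/2}$, then $\mathcal{E}$ contains a pair of $k$-stars with dilation ratio $r$. \end{itemize}
   Context: $\mathbb{F}_q$ is the finite field with $q$ elements, $\mathbb{F}_q^*$ its nonzero elements, and $\mathbb{F}_q^+$ the set of nonzero quadratic residues (nonzero squares) in $\mathbb{F}_q$. For $\bm{x}=(x_1,\ldots,x_d)\in\mathbb{F}_q^d$, $\|\bm{x}\|:=x_1^2+\cdots+x_d^2$. Let $G=(V,E)$ be a graph with $V=\{1,\ldots,n\}$ and $E\subseteq\binom{V}{2}$. A set $\mathcal{E}\subseteq\mathbb{F}_q^d$ contains a pair of $G$ with dilation ratio $r$ if there exist distinct $\bm{x}_1,\ldots,\bm{x}_n\in\mathcal{E}$ and distinct $\bm{y}_1,\ldots,\bm{y}_n\in\mathcal{E}$ such that $\|\bm{y}_i-\bm{y}_j\|=r\|\bm{x}_i-\bm{x}_j\|\neq0$ whenever $\{i,j\}\in E$. A $k$-star is the graph with vertex set $\{1,\ldots,k+1\}$ and edge set $\{\{1,2\},\{1,3\},\ldots,\{1,k+1\}\}$.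 *)

theory Defs
  imports "HOL-Analysis.Analysis"
begin

text \<open>The "norm" ||x|| = x_1^2 + ... + x_d^2 on F_q^d (vectors indexed by a finite type).\<close>
definition sqnorm :: "'a::comm_ring_1 ^ 'n \<Rightarrow> 'a" where
  "sqnorm x = (\<Sum>i\<in>UNIV. (x $ i)^2)"

definition nonzero_squares :: "'a::field set" where
  "nonzero_squares = {y. \<exists>z. z \<noteq> 0 \<and> y = z^2}"

text \<open>A graph on vertex set {1..n} with edge set Ed (a set of 2-element sets of vertices).
  The set S contains a pair of G with dilation ratio r.\<close>
definition contains_pair ::
  "('a::field ^ 'n) set \<Rightarrow> nat \<Rightarrow> nat set set \<Rightarrow> 'a \<Rightarrow> bool" where
  "contains_pair S n Ed r \<longleftrightarrow>
     (\<exists>x y :: nat \<Rightarrow> 'a ^ 'n.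
        inj_on x {1..n} \<and> inj_on y {1..n} \<and>
        x ` {1..n} \<subseteq> S \<and> y ` {1..n} \<subseteq> S \<and>
        (\<forall>i j. {i, j} \<in> Ed \<longrightarrow>
           sqnorm (y i - y j) = r * sqnorm (x i - x j) \<and> sqnorm (x i - x j) \<noteq> 0))"

definition star_edges :: "nat \<Rightarrow> nat set set" where
  "star_edges k = {{1, j} | j. 2 \<le> j \<and> j \<le> k + 1}"

definition contains_star_pair :: "('a::field ^ 'n) set \<Rightarrow> nat \<Rightarrow> 'a \<Rightarrow> bool" where
  "contains_star_pair S k r \<longleftrightarrow> contains_pair S (k + 1) (star_edges k) r"

end

theory Submission
  imports Defs "HOL-Number_Theory.Number_Theory"
begin

text \<open>
  If \<open>E\<close> contains no pair of \<open>k\<close>-stars with ratio \<open>r\<close>, then for any centres \<open>x, y \<in> E\<close> and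
  \<open>t \<noteq> 0\<close> one of the spheres \<open>{x' \<in> E. \<parallel>x - x'\<parallel> = t}\<close>, \<open>{y' \<in> E. \<parallel>y - y'\<parallel> = r t}\<close> has fewer
  than \<open>k\<close> points, so at most \<open>2 (k - 1) |E|\<^sup>3\<close> quadruples satisfy \<open>\<parallel>y - y'\<parallel> = r \<parallel>x - x'\<parallel> \<noteq> 0\<close>.
  This count is bounded from below with a nontrivial additive character \<open>\<psi>\<close> of \<open>F\<^sub>q\<close>.
  Completing the square, Gauss sums turn \<open>\<psi> (s \<parallel>v\<parallel>)\<close> into a Fourier series in \<open>v\<close>. As long
  as \<open>\<eta> (r)\<^sup>d = 1\<close> for the quadratic character \<open>\<eta>\<close> (\<open>d\<close> even or \<open>r\<close> a square), this gives the
  number of all such quadruples as \<open>|E|\<^sup>4 / q\<close> plus a nonnegative spectral energy of \<open>E\<close>, while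
  the number of null pairs \<open>\<parallel>x - y\<parallel> = 0\<close> is \<open>|E|\<^sup>2 / q\<close> up to an error of order
  \<open>q\<^bsup>d/2\<^esup> |E|\<close>. Subtracting the degenerate quadruples, the count exceeds \<open>2 (k - 1) |E|\<^sup>3\<close> once
  \<open>|E|\<close> is a large enough multiple of \<open>q\<^bsup>d/2\<^esup>\<close>.
\<close>

section \<open>Stars from dilated pairs\<close>

lemma sqnorm_0 [simp]: "sqnorm (0 :: 'a::comm_ring_1 ^ 'n) = 0"
  unfolding sqnorm_def by simp

lemma sqnorm_diff_commute: "sqnorm (a - b) = sqnorm (b - (a :: 'a::comm_ring_1 ^ 'n))"
  unfolding sqnorm_def by (simp add: power2_commute)

definition null_pair_count :: "('a::field ^ 'n) set \<Rightarrow> real" where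
  "null_pair_count E = (\<Sum>x\<in>E. \<Sum>y\<in>E. if sqnorm (x - y) = 0 then 1 else 0)"

definition dilation_count :: "('a::field ^ 'n) set \<Rightarrow> 'a \<Rightarrow> real" where
  "dilation_count E r = (\<Sum>x\<in>E. \<Sum>x'\<in>E. \<Sum>y\<in>E. \<Sum>y'\<in>E.
      if sqnorm (y - y') = r * sqnorm (x - x') then 1 else 0)"

definition proper_dilation_count :: "('a::field ^ 'n) set \<Rightarrow> 'a \<Rightarrow> real" where
  "proper_dilation_count E r = (\<Sum>x\<in>E. \<Sum>x'\<in>E. \<Sum>y\<in>E. \<Sum>y'\<in>E.
      if sqnorm (y - y') = r * sqnorm (x - x') \<and> sqnorm (x - x') \<noteq> 0 then 1 else 0)"

lemma null_pair_count_nonneg: "null_pair_count E \<ge> 0"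
  unfolding null_pair_count_def by (intro sum_nonneg) auto

text \<open>For \<open>r \<noteq> 0\<close> the improper quadruples are exactly the pairs of null pairs.\<close>

lemma proper_dilation_count_eq:
  assumes "r \<noteq> 0"
  shows "proper_dilation_count E r = dilation_count E r - null_pair_count E ^ 2"
proof -
  have "null_pair_count E ^ 2 = (\<Sum>x\<in>E. \<Sum>x'\<in>E. \<Sum>y\<in>E. \<Sum>y'\<in>E.
      (if sqnorm (x - x') = 0 then 1 else 0) * (if sqnorm (y - y') = 0 then 1 else 0))"
    unfolding null_pair_count_def power2_eq_square
    by (subst (1) sum_distrib_right, subst sum_distrib_right) (simp only: sum_distrib_left)
  thus ?thesis
    unfolding proper_dilation_count_def dilation_count_def
    by (simp add: sum_subtractf[symmetric]) (intro sum.cong refl, use assms in auto)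
qed

lemma mem_star_edges_iff:
  "{i, j} \<in> star_edges k \<longleftrightarrow> (i = 1 \<and> j \<in> {2..k+1}) \<or> (j = 1 \<and> i \<in> {2..k+1})"
  unfolding star_edges_def by (auto simp: doubleton_eq_iff)

lemma star_labelling_exists:
  assumes "finite S" "card S = k" "c \<notin> S"
  obtains f :: "nat \<Rightarrow> 'b" where "inj_on f {1..k+1}" "f 1 = c" "f ` {2..k+1} = S"
proof -
  obtain g where g: "bij_betw g {0..<k} S"
    using ex_bij_betw_nat_finite[OF assms(1)] assms(2) by auto
  define f where "f j = (if j = 1 then c else g (j - 2))" for j
  have "bij_betw (\<lambda>j. j - 2) {2..k+1} {0..<k}"
    by (rule bij_betw_byWitness[of _ "\<lambda>j. j + 2"]) auto
  hence "bij_betw f {2..k+1} S"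
    unfolding f_def using bij_betw_trans[OF _ g] by (subst bij_betw_cong[of _ _ "g \<circ> (\<lambda>j. j - 2)"]) auto
  hence "inj_on f {1..k+1}" "f ` {2..k+1} = S"
    using assms(3) by (auto simp: bij_betw_def inj_on_def f_def)
  thus ?thesis using that f_def by simp
qed

definition sqnorm_sphere :: "('a::comm_ring_1 ^ 'n) set \<Rightarrow> 'a ^ 'n \<Rightarrow> 'a \<Rightarrow> ('a ^ 'n) set" where
  "sqnorm_sphere E x t = {x'\<in>E. sqnorm (x - x') = t}"

lemma contains_star_pair_if_large_spheres:
  fixes E :: "('a::field ^ 'n) set"
  assumes "x \<in> E" "y \<in> E" "t \<noteq> 0" "r \<noteq> 0"
    and "k \<le> card (sqnorm_sphere E x t)" "k \<le> card (sqnorm_sphere E y (r * t))"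
  shows "contains_star_pair E k r"
proof -
  obtain X where X: "X \<subseteq> sqnorm_sphere E x t" "card X = k" "finite X"
    using obtain_subset_with_card_n[OF assms(5)] by blast
  obtain Y where Y: "Y \<subseteq> sqnorm_sphere E y (r * t)" "card Y = k" "finite Y"
    using obtain_subset_with_card_n[OF assms(6)] by blast
  have "x \<notin> X" "y \<notin> Y" using X(1) Y(1) assms(3,4) by (auto simp: sqnorm_sphere_def)
  then obtain f g :: "nat \<Rightarrow> 'a ^ 'n"
    where f: "inj_on f {1..k+1}" "f 1 = x" "f ` {2..k+1} = X"
      and g: "inj_on g {1..k+1}" "g 1 = y" "g ` {2..k+1} = Y"
    using star_labelling_exists X(2,3) Y(2,3) by metis
  have "{1..k+1} = insert 1 {2..k+1}" by auto
  hence "f ` {1..k+1} \<subseteq> E" "g ` {1..k+1} \<subseteq> E"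
    using f g X(1) Y(1) assms(1,2) by (auto simp: sqnorm_sphere_def)
  moreover have "sqnorm (g 1 - g j) = r * sqnorm (f 1 - f j) \<and> sqnorm (f 1 - f j) \<noteq> 0"
    if "j \<in> {2..k+1}" for j
    using that f g X(1) Y(1) assms(3) by (force simp: sqnorm_sphere_def)
  ultimately show ?thesis
    unfolding contains_star_pair_def contains_pair_def mem_star_edges_iff
    using f(1) g(1) sqnorm_diff_commute by metis
qed

lemma sum_indicator_small_subset_le:
  assumes "finite S" "T \<subseteq> S" "k \<ge> 1"
  shows "(\<Sum>y\<in>S. if y \<in> T \<and> card T < k then 1 else 0 :: real) \<le> real k - 1"
proof (cases "card T < k")
  case True
  have "(\<Sum>y\<in>S. if y \<in> T \<and> card T < k then 1 else 0 :: real) = real (card T)"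
    using True assms(1,2) by (simp add: sum.If_cases Int_absorb1)
  thus ?thesis using True by linarith
qed (use assms in simp)

text \<open>Without a pair of \<open>k\<close>-stars, each proper dilated pair \<open>(x', y')\<close> lies on a sphere
  around \<open>x\<close> or around \<open>y\<close> with fewer than \<open>k\<close> points, so once one coordinate is fixed
  the other has fewer than \<open>k\<close> choices.\<close>

lemma proper_dilations_at_centres_le:
  fixes E :: "('a::field ^ 'n) set"
  assumes E: "finite E" and r: "r \<noteq> 0" and k: "k \<ge> 1" and no_star: "\<not> contains_star_pair E k r"
    and "x \<in> E" "y \<in> E"
  shows "(\<Sum>x'\<in>E. \<Sum>y'\<in>E. if sqnorm (y - y') = r * sqnorm (x - x') \<and> sqnorm (x - x') \<noteq> 0 then 1 else 0)
    \<le> 2 * (real k - 1) * real (card E)"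
proof -
  let ?P = "\<lambda>x' y'. sqnorm (y - y') = r * sqnorm (x - x') \<and> sqnorm (x - x') \<noteq> 0"
  let ?A = "\<lambda>x'. sqnorm_sphere E y (r * sqnorm (x - x'))"
  let ?B = "\<lambda>y'. sqnorm_sphere E x (sqnorm (y - y') / r)"
  have indicator_le: "(if ?P x' y' then 1 else 0 :: real)
      \<le> (if y' \<in> ?A x' \<and> card (?A x') < k then 1 else 0) + (if x' \<in> ?B y' \<and> card (?B y') < k then 1 else 0)"
    if "x' \<in> E" "y' \<in> E" for x' y'
  proof (cases "?P x' y'")
    case True
    define t where "t = sqnorm (x - x')"
    have t: "t \<noteq> 0" "sqnorm (y - y') = r * t" using True by (simp_all add: t_def)
    hence B: "?B y' = sqnorm_sphere E x t" using r by simp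
    have "card (sqnorm_sphere E x t) < k \<or> card (?A x') < k"
      using contains_star_pair_if_large_spheres[OF \<open>x \<in> E\<close> \<open>y \<in> E\<close> t(1) r] no_star
      unfolding t_def by (meson not_le)
    moreover have "y' \<in> ?A x'" "x' \<in> sqnorm_sphere E x t"
      using that t unfolding sqnorm_sphere_def t_def by simp_all
    ultimately show ?thesis unfolding B by auto
  qed simp
  have "(\<Sum>x'\<in>E. \<Sum>y'\<in>E. if ?P x' y' then 1 else 0 :: real)
      \<le> (\<Sum>x'\<in>E. \<Sum>y'\<in>E. if y' \<in> ?A x' \<and> card (?A x') < k then 1 else 0)
        + (\<Sum>x'\<in>E. \<Sum>y'\<in>E. if x' \<in> ?B y' \<and> card (?B y') < k then 1 else 0)"
    unfolding sum.distrib[symmetric] by (intro sum_mono indicator_le)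
  moreover have "(\<Sum>x'\<in>E. \<Sum>y'\<in>E. if y' \<in> ?A x' \<and> card (?A x') < k then 1 else 0) \<le> (\<Sum>x'\<in>E. real k - 1)"
    by (intro sum_mono sum_indicator_small_subset_le E k) (auto simp: sqnorm_sphere_def)
  moreover have "(\<Sum>x'\<in>E. \<Sum>y'\<in>E. if x' \<in> ?B y' \<and> card (?B y') < k then 1 else 0) \<le> (\<Sum>y'\<in>E. real k - 1)"
    by (subst sum.swap, intro sum_mono sum_indicator_small_subset_le E k) (auto simp: sqnorm_sphere_def)
  ultimately show ?thesis by (simp add: algebra_simps)
qed

lemma contains_star_pair_if_many_proper_dilations:
  fixes E :: "('a::field ^ 'n) set"
  assumes E: "finite E" and r: "r \<noteq> 0" and k: "k \<ge> 1"
    and many: "proper_dilation_count E r > 2 * (real k - 1) * real (card E) ^ 3"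
  shows "contains_star_pair E k r"
proof (rule ccontr)
  assume no_star: "\<not> ?thesis"
  let ?e = "real (card E)"
  have "proper_dilation_count E r = (\<Sum>x\<in>E. \<Sum>y\<in>E. \<Sum>x'\<in>E. \<Sum>y'\<in>E.
      if sqnorm (y - y') = r * sqnorm (x - x') \<and> sqnorm (x - x') \<noteq> 0 then 1 else 0)"
    unfolding proper_dilation_count_def by (rule sum.cong[OF refl], rule sum.swap)
  also have "\<dots> \<le> (\<Sum>x\<in>E. \<Sum>y\<in>E. 2 * (real k - 1) * ?e)"
    by (intro sum_mono proper_dilations_at_centres_le[OF E r k no_star])
  also have "\<dots> = 2 * (real k - 1) * ?e ^ 3" by (simp add: power3_eq_cube)
  finally show False using many by simp
qed

section \<open>Additive characters of finite fields\<close>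

lemma prime_CHAR_finite: "prime CHAR('a::{field,finite})"
  by (rule prime_CHAR_semidom) (simp add: finite_imp_CHAR_pos)

lemma two_neq_zero_if_odd_card:
  assumes "odd CARD('a::{field,finite})"
  shows "(2::'a) \<noteq> 0"
proof
  assume "(2::'a) = 0"
  hence "CHAR('a) dvd 2" by (metis of_nat_eq_0_iff_char_dvd of_nat_numeral)
  hence "CHAR('a) = 2"
    using prime_CHAR_finite by (metis prime_nat_iff two_is_prime_nat CHAR_not_1 One_nat_def)
  thus False using assms CHAR_dvd_CARD[where 'a='a] by auto
qed

lemma card_ge_3_if_odd_card:
  assumes "odd CARD('a::{field,finite})"
  shows "CARD('a) \<ge> 3"
proof -
  have "card {0::'a, 1} \<le> CARD('a)" by (rule card_mono) auto
  hence "CARD('a) \<ge> 2" by simp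
  thus ?thesis using assms by presburger
qed

definition add_closed :: "'a::monoid_add set \<Rightarrow> bool" where
  "add_closed H \<longleftrightarrow> 0 \<in> H \<and> (\<forall>x\<in>H. \<forall>y\<in>H. x + y \<in> H)"

lemma add_closed_of_nat_mult:
  assumes "add_closed H" "h \<in> H"
  shows "of_nat n * h \<in> H"
  using assms by (induction n) (auto simp: add_closed_def distrib_right)

lemma of_int_eq_of_nat_mod_CHAR:
  "(of_int m :: 'a::{ring_1,finite}) = of_nat (nat (m mod int CHAR('a)))"
  using finite_imp_CHAR_pos[where 'a='a] by (simp add: of_int_eq_iff_cong_CHAR cong_def)

text \<open>In characteristic \<open>p\<close>, \<open>-h = (p - 1) h\<close>: additively closed sets are closed under negation.\<close>

lemma add_closed_of_int_mult:
  fixes H :: "'a::{field,finite} set"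
  assumes "add_closed H" "h \<in> H"
  shows "of_int m * h \<in> H"
  using add_closed_of_nat_mult[OF assms] by (subst of_int_eq_of_nat_mod_CHAR) simp

lemma add_closed_uminus:
  fixes H :: "'a::{field,finite} set"
  assumes "add_closed H" "h \<in> H"
  shows "- h \<in> H"
  using add_closed_of_int_mult[OF assms, of "-1"] by simp

lemma add_closed_diff:
  fixes H :: "'a::{field,finite} set"
  assumes "add_closed H" "x \<in> H" "y \<in> H"
  shows "x - y \<in> H"
  using assms add_closed_uminus[OF assms(1,3)] unfolding add_closed_def
  by (metis diff_conv_add_uminus)

lemma add_closed_of_int_mem:
  fixes H :: "'a::{field,finite} set"
  assumes "add_closed H" "1 \<notin> H" "of_int m \<in> H"
  shows "int CHAR('a) dvd m"
proof (rule ccontr)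
  assume "\<not> int CHAR('a) dvd m"
  hence "coprime m (int CHAR('a))"
    using prime_CHAR_finite by (metis coprime_commute prime_imp_coprime prime_nat_int_transfer)
  then obtain m' where "[m * m' = 1] (mod int CHAR('a))"
    by (metis cong_solve_coprime_int)
  hence "of_int m' * of_int m = (1::'a)"
    by (metis mult.commute of_int_1 of_int_eq_iff_cong_CHAR of_int_mult)
  thus False using assms add_closed_of_int_mult[OF assms(1,3), of m'] by simp
qed

lemma add_closed_of_nat_diff_mem:
  fixes H :: "'a::{field,finite} set"
  assumes "add_closed H" "1 \<notin> H" "of_nat a - of_nat b \<in> H"
  shows "a mod CHAR('a) = b mod CHAR('a)"
proof -
  have "int CHAR('a) dvd int a - int b"
    using add_closed_of_int_mem[OF assms(1,2), of "int a - int b"] assms(3) by simp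
  thus ?thesis by (metis mod_eq_dvd_iff of_nat_eq_iff zmod_int)
qed

lemma add_closed_add_multiples:
  assumes "add_closed H"
  shows "add_closed {h + of_nat i * x | h i. h \<in> H}"
  unfolding add_closed_def
proof (intro conjI ballI)
  show "0 \<in> {h + of_nat i * x |h i. h \<in> H}"
    using assms by (auto simp: add_closed_def intro!: exI[of _ 0])
next
  fix a b assume "a \<in> {h + of_nat i * x |h i. h \<in> H}" "b \<in> {h + of_nat i * x |h i. h \<in> H}"
  then obtain h1 i1 h2 i2 where "a = h1 + of_nat i1 * x" "b = h2 + of_nat i2 * x" "h1 \<in> H" "h2 \<in> H"
    by blast
  moreover have "h1 + h2 \<in> H" using assms \<open>h1 \<in> H\<close> \<open>h2 \<in> H\<close> by (simp add: add_closed_def)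
  ultimately show "a + b \<in> {h + of_nat i * x |h i. h \<in> H}"
    by (intro CollectI exI[of _ "h1 + h2"] exI[of _ "i1 + i2"]) (simp add: algebra_simps)
qed

text \<open>A largest additively closed set avoiding \<open>1\<close> is a complement of the prime field.\<close>

lemma max_add_closed_complement:
  fixes H :: "'a::{field,finite} set"
  assumes H: "add_closed H" "1 \<notin> H"
    and max: "\<And>H'::'a set. add_closed H' \<Longrightarrow> 1 \<notin> H' \<Longrightarrow> card H' \<le> card H"
  shows "\<exists>j. x - of_nat j \<in> H"
proof (cases "x \<in> H")
  case True thus ?thesis by (intro exI[of _ 0]) simp
next
  case False
  define H' where "H' = {h + of_nat i * x | h i. h \<in> H}"
  have "add_closed H'" unfolding H'_def by (rule add_closed_add_multiples[OF H(1)])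
  moreover have "H \<subset> H'"
    using False H by (force simp: H'_def add_closed_def intro: exI[of _ 0] exI[of _ 1])
  ultimately have "1 \<in> H'"
    using max[of H'] psubset_card_mono[of H' H] by fastforce
  then obtain h i where hi: "1 = h + of_nat i * x" "h \<in> H" unfolding H'_def by blast
  have "\<not> int CHAR('a) dvd int i"
    using add_closed_of_int_mem[OF H, of "int i"] hi H(2)
    by (metis add.right_neutral mult_zero_left of_int_of_nat_eq of_nat_eq_0_iff_char_dvd int_dvd_int_iff)
  hence "coprime (int i) (int CHAR('a))"
    using prime_CHAR_finite by (metis coprime_commute prime_imp_coprime prime_nat_int_transfer)
  then obtain i' where "[int i * i' = 1] (mod int CHAR('a))"
    by (metis cong_solve_coprime_int)
  hence ii: "of_int i' * of_nat i = (1::'a)"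
    by (metis mult.commute of_int_1 of_int_eq_iff_cong_CHAR of_int_mult of_int_of_nat_eq)
  have "x - of_int i' = - (of_int i' * h)"
    using arg_cong[OF hi(1), of "\<lambda>z. of_int i' * z"] ii by (simp add: algebra_simps)
  also have "\<dots> \<in> H"
    using add_closed_of_int_mult[OF H(1) hi(2), of "- i'"] by simp
  finally show ?thesis
    by (subst (asm) of_int_eq_of_nat_mod_CHAR) blast
qed

text \<open>With \<open>H\<close> a complement of the prime field, write \<open>x = j x + h\<close> with \<open>h \<in> H\<close>; then \<open>j\<close> is
  additive modulo \<open>p\<close> and \<open>\<psi> x = exp (2 \<pi> i j x / p)\<close> is the required character.\<close>

lemma nontrivial_add_char_exists:
  "\<exists>\<psi>::'a::{field,finite} \<Rightarrow> complex.
     (\<forall>x y. \<psi> (x + y) = \<psi> x * \<psi> y) \<and> (\<forall>x. cmod (\<psi> x) = 1) \<and> \<psi> 1 \<noteq> 1"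
proof -
  obtain H :: "'a set" where H: "add_closed H" "1 \<notin> H"
    and max: "\<And>H'::'a set. add_closed H' \<Longrightarrow> 1 \<notin> H' \<Longrightarrow> card H' \<le> card H"
    using ex_has_greatest_nat[of "\<lambda>H::'a set. add_closed H \<and> 1 \<notin> H" "{0}" card "Suc CARD('a)"]
    by (force simp: add_closed_def card_mono less_Suc_eq_le)
  define p where "p = CHAR('a)"
  have p: "p \<ge> 2" unfolding p_def using prime_CHAR_finite prime_ge_2_nat by blast
  define j where "j x = (SOME j. x - of_nat j \<in> H)" for x :: 'a
  have j: "x - of_nat (j x) \<in> H" for x
    unfolding j_def using max_add_closed_complement[OF H max] by (rule someI_ex)
  define e where "e m = exp (2 * of_real pi * \<i> * of_nat m / of_nat p)" for m :: nat
  have e_eq_iff: "e a = e b \<longleftrightarrow> a mod p = b mod p" for a b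
    unfolding e_def using p by (intro complex_root_unity_eq) simp
  have e_add: "e (a + b) = e a * e b" for a b
    unfolding e_def by (simp add: add_divide_distrib distrib_left exp_add)
  show ?thesis
  proof (intro exI conjI allI)
    fix x y :: 'a
    have "of_nat (j (x + y)) - of_nat (j x + j y) = - ((x + y - of_nat (j (x + y))) - (x - of_nat (j x)) - (y - of_nat (j y)))"
      by (simp add: algebra_simps)
    also have "\<dots> \<in> H"
      using j by (intro add_closed_uminus[OF H(1)] add_closed_diff[OF H(1) add_closed_diff[OF H(1)]])
    finally have "e (j (x + y)) = e (j x + j y)"
      unfolding e_eq_iff p_def by (rule add_closed_of_nat_diff_mem[OF H])
    thus "e (j (x + y)) = e (j x) * e (j y)" by (simp add: e_add)
  next
    show "cmod (e (j x)) = 1" for x unfolding e_def by simp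
  next
    have "of_nat (j 1) - of_nat 1 = - (1 - of_nat (j 1) :: 'a)" by simp
    also have "\<dots> \<in> H" using j by (intro add_closed_uminus[OF H(1)])
    finally have "e (j 1) = e 1"
      unfolding e_eq_iff p_def by (rule add_closed_of_nat_diff_mem[OF H])
    also have "e 1 \<noteq> 1"
      unfolding e_def using p complex_root_unity_eq_1[of p 1] by simp
    finally show "e (j 1) \<noteq> 1" .
  qed
qed

section \<open>The quadratic character\<close>

definition quad_char :: "'a::field \<Rightarrow> 'b::ring_1" where
  "quad_char x = (if x = 0 then 0 else if \<exists>y. y^2 = x then 1 else -1)"

lemma quad_char_0 [simp]: "quad_char 0 = 0"
  by (simp add: quad_char_def)

lemma of_real_quad_char: "of_real (quad_char x) = quad_char x"
  by (simp add: quad_char_def)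

lemma quad_char_square: "x \<noteq> 0 \<Longrightarrow> quad_char (x^2) = 1"
  by (auto simp: quad_char_def)

lemma quad_char_pow_odd: "odd n \<Longrightarrow> quad_char x ^ n = quad_char x"
  by (auto simp: quad_char_def power_0_left)

lemma quad_char_pow_even: "x \<noteq> 0 \<Longrightarrow> even n \<Longrightarrow> quad_char x ^ n = 1"
  by (auto simp: quad_char_def)

lemma mem_nonzero_squares_iff: "x \<in> nonzero_squares \<longleftrightarrow> x \<noteq> 0 \<and> (\<exists>y. y^2 = x)"
  by (auto simp: nonzero_squares_def)

lemma square_mult_iff:
  fixes x y :: "'a::field"
  assumes "a \<noteq> 0" "a^2 = x"
  shows "(\<exists>c. c^2 = x * y) \<longleftrightarrow> (\<exists>b. b^2 = y)"
proof
  assume "\<exists>c. c^2 = x * y"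
  then obtain c where "c^2 = x * y" by blast
  hence "(c / a)^2 = y" using assms by (auto simp: power_divide)
  thus "\<exists>b. b^2 = y" by blast
next
  assume "\<exists>b. b^2 = y"
  then obtain b where "b^2 = y" by blast
  hence "(a * b)^2 = x * y" using assms by (simp add: power_mult_distrib)
  thus "\<exists>c. c^2 = x * y" by blast
qed

context
  assumes odd_card: "odd CARD('a::{field,finite})"
begin

lemma card_sqrt: "of_nat (card {x::'a. x^2 = t}) = 1 + quad_char t"
proof (cases "t \<noteq> 0 \<and> (\<exists>y. y^2 = t)")
  case True
  then obtain y where y: "y^2 = t" "y \<noteq> 0" by auto
  have "y \<noteq> -y"
    using y two_neq_zero_if_odd_card[OF odd_card] by (metis add_eq_0_iff2 mult_2 mult_eq_0_iff)
  moreover have "{x. x^2 = t} = {y, -y}"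
    using y power2_eq_iff[of _ y] by auto
  ultimately show ?thesis using True by (simp add: quad_char_def)
qed (auto simp: quad_char_def)

lemma card_nonzero_squares: "2 * card (nonzero_squares :: 'a set) = CARD('a) - 1"
proof -
  have "(\<lambda>x. x^2) ` (UNIV - {0::'a}) \<subseteq> nonzero_squares"
    by (auto simp: nonzero_squares_def)
  hence "card (UNIV - {0::'a}) = (\<Sum>s\<in>nonzero_squares. card {x\<in>UNIV - {0::'a}. x^2 = s})"
    using sum.group[of "UNIV - {0::'a}" nonzero_squares "\<lambda>x. x^2" "\<lambda>_. 1::nat"] by simp
  also have "\<dots> = (\<Sum>s\<in>(nonzero_squares::'a set). 2)"
  proof (rule sum.cong[OF refl])
    fix s :: 'a assume s: "s \<in> nonzero_squares"
    hence "{x\<in>UNIV - {0}. x^2 = s} = {x. x^2 = s}" by (auto simp: nonzero_squares_def)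
    moreover have "(of_nat (card {x::'a. x^2 = s}) :: int) = 2"
      using s by (simp add: card_sqrt quad_char_def mem_nonzero_squares_iff)
    ultimately show "card {x\<in>UNIV - {0}. x^2 = s} = 2" by simp
  qed
  finally show ?thesis by simp
qed

lemma nonsquare_mult_nonsquare:
  fixes x y :: 'a
  assumes "x \<noteq> 0" "y \<noteq> 0" "\<nexists>a. a^2 = x" "\<nexists>b. b^2 = y"
  shows "\<exists>c. c^2 = x * y"
proof -
  define N where "N = {z::'a. z \<noteq> 0 \<and> (\<nexists>a. a^2 = z)}"
  have "UNIV - {0} = nonzero_squares \<union> N" "nonzero_squares \<inter> N = {}"
    by (auto simp: mem_nonzero_squares_iff N_def)
  hence "card (nonzero_squares :: 'a set) + card N = card (UNIV - {0::'a})"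
    using card_Un_disjoint[of nonzero_squares N] by simp
  also have "\<dots> = CARD('a) - 1"
    by (simp add: card_Diff_singleton)
  finally have card_N: "card N = card (nonzero_squares :: 'a set)"
    using card_nonzero_squares by simp
  have "(*) x ` nonzero_squares \<subseteq> N"
  proof
    fix z assume "z \<in> (*) x ` nonzero_squares"
    then obtain a where "a \<noteq> 0" "z = a^2 * x" by (auto simp: nonzero_squares_def)
    thus "z \<in> N" using assms(1,3) square_mult_iff[of a "a^2" x] by (simp add: N_def)
  qed
  moreover have "card ((*) x ` nonzero_squares) = card N"
    using assms(1) card_N by (simp add: card_image inj_on_def)
  ultimately have "(*) x ` nonzero_squares = N"
    by (intro card_subset_eq) auto
  moreover have "y \<in> N" using assms by (simp add: N_def)
  ultimately obtain b where "y = x * b^2" by (auto simp: nonzero_squares_def)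
  hence "(x * b)^2 = x * y" by (simp add: power2_eq_square)
  thus ?thesis by blast
qed

lemma quad_char_mult: "quad_char (x * y :: 'a) = quad_char x * quad_char y"
proof (cases "x = 0 \<or> y = 0")
  case False
  hence "x \<noteq> 0" "y \<noteq> 0" by auto
  consider a where "a^2 = x" | b where "b^2 = y" | "\<nexists>a. a^2 = x" "\<nexists>b. b^2 = y" by blast
  thus ?thesis
  proof cases
    case (1 a)
    thus ?thesis using square_mult_iff[of a x y] \<open>x \<noteq> 0\<close> \<open>y \<noteq> 0\<close> by (auto simp: quad_char_def)
  next
    case (2 b)
    thus ?thesis
      using square_mult_iff[of b y x] \<open>x \<noteq> 0\<close> \<open>y \<noteq> 0\<close> by (auto simp: quad_char_def mult.commute)
  next
    case 3
    thus ?thesis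
      using nonsquare_mult_nonsquare \<open>x \<noteq> 0\<close> \<open>y \<noteq> 0\<close> by (auto simp: quad_char_def)
  qed
qed (auto simp: quad_char_def)

lemma quad_char_inverse: "quad_char (inverse x :: 'a) = quad_char x"
proof (cases "x = 0")
  case False
  have "x * (inverse x)^2 = inverse x"
    using False by (simp add: power2_eq_square mult.assoc[symmetric])
  hence "quad_char (inverse x) = quad_char (x * (inverse x)^2)" by simp
  thus ?thesis using False by (simp add: quad_char_mult quad_char_square)
qed simp

lemma sum_quad_char: "(\<Sum>t\<in>UNIV. quad_char (t::'a)) = 0"
proof -
  have "(\<Sum>t\<in>UNIV. card {x::'a. x^2 = t}) = CARD('a)"
    using sum.group[of "UNIV::'a set" UNIV "\<lambda>x. x^2" "\<lambda>_. 1::nat"] by simp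
  hence "(\<Sum>t\<in>UNIV. 1 + quad_char (t::'a)) = of_nat CARD('a)"
    by (metis (no_types, lifting) card_sqrt of_nat_sum sum.cong)
  thus ?thesis by (simp add: sum.distrib)
qed

end

section \<open>Fourier analysis over a finite field\<close>

lemma sum_shift_UNIV:
  fixes f :: "'a::{ab_group_add,finite} \<Rightarrow> 'b::comm_monoid_add"
  shows "(\<Sum>x\<in>UNIV. f (x + c)) = (\<Sum>x\<in>UNIV. f x)"
  by (rule sum.reindex_bij_witness[of _ "\<lambda>x. x - c" "\<lambda>x. x + c"]) auto

lemma sum_scale_UNIV:
  fixes f :: "'a::{field,finite} \<Rightarrow> 'b::comm_monoid_add"
  assumes "a \<noteq> 0"
  shows "(\<Sum>x\<in>UNIV. f (a * x)) = (\<Sum>x\<in>UNIV. f x)"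
  using assms by (intro sum.reindex_bij_witness[of _ "\<lambda>x. x / a" "\<lambda>x. a * x"]) auto

lemma sum_inverse_nonzero:
  fixes f :: "'a::{field,finite} \<Rightarrow> 'b::comm_monoid_add"
  shows "(\<Sum>x\<in>UNIV - {0}. f (inverse x)) = (\<Sum>x\<in>UNIV - {0}. f x)"
  by (rule sum.reindex_bij_witness[of _ inverse inverse]) auto

lemma sum4_product_swap:
  fixes f g :: "'s \<Rightarrow> 'v \<Rightarrow> 'v \<Rightarrow> 'c::comm_semiring_1"
  shows "(\<Sum>x\<in>A. \<Sum>x'\<in>A. \<Sum>y\<in>A. \<Sum>y'\<in>A. \<Sum>\<sigma>\<in>S. f \<sigma> x x' * g \<sigma> y y')
       = (\<Sum>\<sigma>\<in>S. (\<Sum>x\<in>A. \<Sum>x'\<in>A. f \<sigma> x x') * (\<Sum>y\<in>A. \<Sum>y'\<in>A. g \<sigma> y y'))"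
  unfolding sum_distrib_right by (simp add: sum_distrib_left sum.swap[of _ S])

lemma prod_sum_vec:
  fixes f :: "'n::finite \<Rightarrow> 'a::finite \<Rightarrow> 'c::comm_semiring_1"
  shows "(\<Prod>i\<in>UNIV. \<Sum>a\<in>UNIV. f i a) = (\<Sum>v\<in>(UNIV :: ('a ^ 'n) set). \<Prod>i\<in>UNIV. f i (v $ i))"
proof -
  have "(\<Prod>i\<in>UNIV. \<Sum>a\<in>UNIV. f i a) = (\<Sum>g\<in>UNIV. \<Prod>i\<in>UNIV. f i (g i))"
    by (subst prod_sum_PiE) auto
  also have "\<dots> = (\<Sum>v\<in>(UNIV :: ('a ^ 'n) set). \<Prod>i\<in>UNIV. f i (v $ i))"
    by (rule sum.reindex_bij_witness[of _ vec_nth vec_lambda]) auto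
  finally show ?thesis .
qed

definition dotp :: "'a::comm_ring_1 ^ 'n \<Rightarrow> 'a ^ 'n \<Rightarrow> 'a" where
  "dotp u v = (\<Sum>i\<in>UNIV. u $ i * v $ i)"

lemma dotp_diff: "dotp u (v - w) = dotp u v - dotp u w"
  unfolding dotp_def by (simp add: algebra_simps sum_subtractf)

locale add_char =
  fixes \<psi> :: "'a::{field,finite} \<Rightarrow> complex"
  assumes psi_add: "\<psi> (x + y) = \<psi> x * \<psi> y"
    and norm_psi: "cmod (\<psi> x) = 1"
    and psi_1_neq_1: "\<psi> 1 \<noteq> 1"
begin

lemma psi_0: "\<psi> 0 = 1"
  using psi_add[of 0 0] norm_psi[of 0] by (metis add_0 mult_cancel_left2 norm_zero zero_neq_one)

lemma cnj_psi: "cnj (\<psi> x) = \<psi> (- x)"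
proof -
  have "\<psi> x * \<psi> (- x) = 1" using psi_add[of x "- x"] psi_0 by simp
  moreover have "\<psi> x * cnj (\<psi> x) = 1" using complex_norm_square[of "\<psi> x"] norm_psi[of x] by simp
  ultimately show ?thesis using norm_psi[of x] by (metis mult_left_cancel norm_zero zero_neq_one)
qed

lemma psi_diff: "\<psi> (x - y) = \<psi> x * cnj (\<psi> y)"
  using psi_add[of x "- y"] cnj_psi[of y] by simp

lemma psi_sum: "\<psi> (sum f I) = (\<Prod>i\<in>I. \<psi> (f i))"
  by (induction I rule: infinite_finite_induct) (auto simp: psi_0 psi_add)

lemma sum_psi_mult: "(\<Sum>x\<in>UNIV. \<psi> (a * x)) = (if a = 0 then of_nat CARD('a) else 0)"
proof (cases "a = 0")
  case False
  define S where "S = (\<Sum>x\<in>UNIV. \<psi> x)"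
  have "S = (\<Sum>x\<in>UNIV. \<psi> (x + 1))" unfolding S_def by (rule sum_shift_UNIV[symmetric])
  also have "\<dots> = S * \<psi> 1" unfolding S_def by (simp add: psi_add sum_distrib_right)
  finally have "S = 0" using psi_1_neq_1 by (metis mult_cancel_left2)
  thus ?thesis using sum_scale_UNIV[OF False, of \<psi>] False by (simp add: S_def)
qed (simp add: psi_0)

lemma sum_psi_mult_right: "(\<Sum>x\<in>UNIV. \<psi> (x * a)) = (if a = 0 then of_nat CARD('a) else 0)"
  using sum_psi_mult[of a] by (simp add: mult.commute)

lemma sum_psi_mult_inverse:
  "(\<Sum>s\<in>UNIV - {0}. \<psi> (c * inverse s)) = (if c = 0 then of_nat CARD('a) else 0) - 1"
  using sum_inverse_nonzero[of "\<lambda>s. \<psi> (c * s)"] sum_psi_mult[of c]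
  by (simp add: sum_diff1 psi_0)

lemma sum_psi_dotp:
  fixes w :: "'a ^ 'n::finite"
  shows "(\<Sum>\<xi>\<in>UNIV. \<psi> (dotp \<xi> w)) = (if w = 0 then of_nat CARD('a) ^ CARD('n) else 0)"
proof -
  have "(\<Sum>\<xi>\<in>UNIV. \<psi> (dotp \<xi> w)) = (\<Prod>i\<in>(UNIV::'n set). \<Sum>a\<in>UNIV. \<psi> (a * w $ i))"
    unfolding dotp_def psi_sum by (rule prod_sum_vec[symmetric])
  also have "\<dots> = (\<Prod>i\<in>(UNIV::'n set). if w $ i = 0 then of_nat CARD('a) else 0)"
    by (simp add: sum_psi_mult_right)
  also have "\<dots> = (if w = 0 then of_nat CARD('a) ^ CARD('n) else 0)"
    by (auto simp: vec_eq_iff)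
  finally show ?thesis .
qed

definition fourier :: "('a ^ 'n) set \<Rightarrow> 'a ^ 'n \<Rightarrow> complex" where
  "fourier E \<xi> = (\<Sum>x\<in>E. \<psi> (dotp \<xi> x))"

definition fourier_sq :: "('a ^ 'n) set \<Rightarrow> 'a ^ 'n \<Rightarrow> real" where
  "fourier_sq E \<xi> = cmod (fourier E \<xi>) ^ 2"

lemma fourier_sq_nonneg: "fourier_sq E \<xi> \<ge> 0"
  by (simp add: fourier_sq_def)

lemma of_real_fourier_sq:
  "of_real (fourier_sq E \<xi>) = (\<Sum>x\<in>E. \<Sum>y\<in>E. \<psi> (dotp \<xi> (x - y)))"
  unfolding fourier_sq_def complex_norm_square fourier_def
  by (simp add: sum_product dotp_diff psi_diff)

lemma plancherel:
  fixes E :: "('a ^ 'n::finite) set"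
  shows "(\<Sum>\<xi>\<in>UNIV. fourier_sq E \<xi>) = real CARD('a) ^ CARD('n) * real (card E)"
proof -
  have "(\<Sum>\<xi>\<in>UNIV. of_real (fourier_sq E \<xi>)) = (\<Sum>x\<in>E. \<Sum>y\<in>E. \<Sum>\<xi>\<in>UNIV. \<psi> (dotp \<xi> (x - y)))"
    unfolding of_real_fourier_sq by (simp add: sum.swap[of _ UNIV])
  also have "\<dots> = (\<Sum>x\<in>E. of_nat CARD('a) ^ CARD('n))"
    by (simp add: sum_psi_dotp sum.delta)
  finally have "of_real (\<Sum>\<xi>\<in>UNIV. fourier_sq E \<xi>) = (of_real (real CARD('a) ^ CARD('n) * real (card E)) :: complex)"
    by (simp add: mult.commute)
  thus ?thesis by (simp only: of_real_eq_iff)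
qed

definition sqnorm_char_sum :: "('a ^ 'n) set \<Rightarrow> 'a \<Rightarrow> complex" where
  "sqnorm_char_sum E s = (\<Sum>x\<in>E. \<Sum>y\<in>E. \<psi> (s * sqnorm (x - y)))"

lemma sqnorm_char_sum_0: "sqnorm_char_sum E 0 = of_nat (card E) ^ 2"
  unfolding sqnorm_char_sum_def by (simp add: psi_0 power2_eq_square)

lemma null_pair_count_char_sum:
  "of_nat CARD('a) * of_real (null_pair_count E) = (\<Sum>\<sigma>\<in>UNIV. sqnorm_char_sum E \<sigma>)"
proof -
  have "of_nat CARD('a) * of_real (null_pair_count E)
      = (\<Sum>x\<in>E. \<Sum>y\<in>E. \<Sum>\<sigma>\<in>UNIV. \<psi> (\<sigma> * sqnorm (x - y)))"
    unfolding null_pair_count_def of_real_sum sum_distrib_left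
    by (intro sum.cong refl) (simp add: sum_psi_mult_right)
  also have "\<dots> = (\<Sum>\<sigma>\<in>UNIV. sqnorm_char_sum E \<sigma>)"
    unfolding sqnorm_char_sum_def by (rule trans[OF sum.cong[OF refl sum.swap] sum.swap])
  finally show ?thesis .
qed

lemma dilation_count_char_sum:
  "of_nat CARD('a) * of_real (dilation_count E r)
     = (\<Sum>\<sigma>\<in>UNIV. sqnorm_char_sum E (- (\<sigma> * r)) * sqnorm_char_sum E \<sigma>)"
proof -
  have indicator: "of_nat CARD('a) * of_real (if sqnorm (y - y') = r * sqnorm (x - x') then 1 else 0)
      = (\<Sum>\<sigma>\<in>UNIV. \<psi> (- (\<sigma> * r) * sqnorm (x - x')) * \<psi> (\<sigma> * sqnorm (y - y')))"
    for x x' y y' :: "'a ^ 'n"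
  proof -
    have "- (\<sigma> * r) * sqnorm (x - x') + \<sigma> * sqnorm (y - y') = \<sigma> * (sqnorm (y - y') - r * sqnorm (x - x'))"
      for \<sigma> by (simp add: algebra_simps)
    thus ?thesis by (simp add: psi_add[symmetric] sum_psi_mult_right psi_0)
  qed
  have "of_nat CARD('a) * of_real (dilation_count E r)
      = (\<Sum>x\<in>E. \<Sum>x'\<in>E. \<Sum>y\<in>E. \<Sum>y'\<in>E. \<Sum>\<sigma>\<in>UNIV.
           \<psi> (- (\<sigma> * r) * sqnorm (x - x')) * \<psi> (\<sigma> * sqnorm (y - y')))"
    unfolding dilation_count_def of_real_sum sum_distrib_left by (intro sum.cong refl) (rule indicator)
  thus ?thesis unfolding sqnorm_char_sum_def sum4_product_swap .
qed

definition null_fourier_mass :: "('a ^ 'n) set \<Rightarrow> real" where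
  "null_fourier_mass E = (\<Sum>\<xi>\<in>UNIV. if sqnorm \<xi> = 0 then fourier_sq E \<xi> else 0)"

definition dilated_fourier_energy :: "('a ^ 'n) set \<Rightarrow> 'a \<Rightarrow> real" where
  "dilated_fourier_energy E r =
     (\<Sum>\<xi>\<in>UNIV. \<Sum>\<eta>\<in>UNIV. if sqnorm \<xi> = r * sqnorm \<eta> then fourier_sq E \<xi> * fourier_sq E \<eta> else 0)"

lemma null_fourier_mass_nonneg: "null_fourier_mass E \<ge> 0"
  unfolding null_fourier_mass_def by (intro sum_nonneg) (simp add: fourier_sq_nonneg)

lemma null_fourier_mass_le:
  fixes E :: "('a ^ 'n::finite) set"
  shows "null_fourier_mass E \<le> real CARD('a) ^ CARD('n) * real (card E)"
  unfolding null_fourier_mass_def plancherel[symmetric] by (intro sum_mono) (simp add: fourier_sq_nonneg)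

lemma dilated_fourier_energy_nonneg: "dilated_fourier_energy E r \<ge> 0"
  unfolding dilated_fourier_energy_def by (intro sum_nonneg) (simp add: fourier_sq_nonneg)

lemma null_fourier_mass_square_le: "null_fourier_mass E ^ 2 \<le> dilated_fourier_energy E r"
proof -
  have "null_fourier_mass E ^ 2 = (\<Sum>\<xi>\<in>UNIV. \<Sum>\<eta>\<in>UNIV.
      (if sqnorm \<xi> = 0 then fourier_sq E \<xi> else 0) * (if sqnorm \<eta> = 0 then fourier_sq E \<eta> else 0))"
    unfolding null_fourier_mass_def power2_eq_square by (rule sum_product)
  also have "\<dots> \<le> dilated_fourier_energy E r"
    unfolding dilated_fourier_energy_def by (intro sum_mono) (simp add: fourier_sq_nonneg)
  finally show ?thesis .
qed

end

section \<open>Quadratic Gauss sums\<close>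

locale odd_add_char = add_char \<psi> for \<psi> :: "'a::{field,finite} \<Rightarrow> complex" +
  assumes odd_card: "odd CARD('a)"
begin

lemma two_neq_zero: "(2::'a) \<noteq> 0"
  by (rule two_neq_zero_if_odd_card[OF odd_card])

lemma four_neq_zero: "(4::'a) \<noteq> 0"
  using two_neq_zero by (metis mult_2_right numeral_Bit0 mult_eq_0_iff numeral_times_numeral)

definition gauss_sum :: "'a \<Rightarrow> complex" where
  "gauss_sum a = (\<Sum>x\<in>UNIV. \<psi> (a * x^2))"

definition quad_gauss_sum :: "'a \<Rightarrow> complex" where
  "quad_gauss_sum c = (\<Sum>u\<in>UNIV. quad_char u * \<psi> (c * u))"

lemma quad_gauss_sum_0: "quad_gauss_sum 0 = 0"
  unfolding quad_gauss_sum_def using sum_quad_char[OF odd_card] by (simp add: psi_0)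

text \<open>Group the terms of \<open>gauss_sum a\<close> by \<open>t = x\<^sup>2\<close>: there are \<open>1 + quad_char t\<close> such \<open>x\<close>.\<close>

lemma gauss_sum_eq_quad_gauss_sum:
  assumes "a \<noteq> 0"
  shows "gauss_sum a = quad_gauss_sum a"
proof -
  have "gauss_sum a = (\<Sum>t\<in>UNIV. of_nat (card {x::'a. x^2 = t}) * \<psi> (a * t))"
    unfolding gauss_sum_def
    using sum.group[of "UNIV::'a set" UNIV "\<lambda>x. x^2" "\<lambda>x. \<psi> (a * x^2)"] by simp
  also have "\<dots> = (\<Sum>t\<in>UNIV. \<psi> (a * t)) + quad_gauss_sum a"
    unfolding quad_gauss_sum_def card_sqrt[OF odd_card] by (simp add: distrib_right sum.distrib)
  finally show ?thesis using sum_psi_mult[of a] assms by simp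
qed

lemma gauss_sum_scale:
  assumes "a \<noteq> 0"
  shows "gauss_sum a = quad_char a * gauss_sum 1"
proof -
  have "gauss_sum a = (\<Sum>u\<in>UNIV. quad_char (inverse a * u) * \<psi> (a * (inverse a * u)))"
    using gauss_sum_eq_quad_gauss_sum[OF assms] sum_scale_UNIV[of "inverse a" "\<lambda>t. quad_char t * \<psi> (a * t)"] assms
    by (simp add: quad_gauss_sum_def)
  also have "\<dots> = quad_char a * quad_gauss_sum 1"
    unfolding quad_gauss_sum_def sum_distrib_left using assms
    by (intro sum.cong refl)
      (simp add: quad_char_mult[OF odd_card] quad_char_inverse[OF odd_card] mult.assoc[symmetric])
  finally show ?thesis using gauss_sum_eq_quad_gauss_sum[of 1] by simp
qed

lemma gauss_sum_mult_uminus: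
  assumes "a \<noteq> 0"
  shows "gauss_sum a * gauss_sum (- a) = of_nat CARD('a)"
proof -
  have "gauss_sum a * gauss_sum (- a) = (\<Sum>y\<in>UNIV. \<Sum>x\<in>UNIV. \<psi> (a * x^2) * \<psi> (- a * y^2))"
    unfolding gauss_sum_def sum_product by (rule sum.swap)
  also have "\<dots> = (\<Sum>y\<in>UNIV. \<Sum>x\<in>UNIV. \<psi> (a * (x + y)^2) * \<psi> (- a * y^2))"
    by (rule sum.cong[OF refl], rule sum_shift_UNIV[symmetric, of "\<lambda>x. \<psi> (a * x^2) * \<psi> (- a * _)"])
  also have "\<dots> = (\<Sum>y\<in>UNIV. \<Sum>x\<in>UNIV. \<psi> (a * x^2) * \<psi> ((2 * a * x) * y))"
  proof (intro sum.cong refl)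
    fix x y
    have "a * (x + y)^2 + (- a * y^2) = a * x^2 + (2 * a * x) * y"
      by (simp add: power2_eq_square algebra_simps)
    thus "\<psi> (a * (x + y)^2) * \<psi> (- a * y^2) = \<psi> (a * x^2) * \<psi> ((2 * a * x) * y)"
      by (metis psi_add)
  qed
  also have "\<dots> = (\<Sum>x\<in>UNIV. \<psi> (a * x^2) * (\<Sum>y\<in>UNIV. \<psi> ((2 * a * x) * y)))"
    by (subst sum.swap) (simp add: sum_distrib_left)
  also have "\<dots> = (\<Sum>x\<in>UNIV. if x = (0::'a) then of_nat CARD('a) else 0)"
  proof (rule sum.cong[OF refl])
    fix x :: 'a
    show "\<psi> (a * x^2) * (\<Sum>y\<in>UNIV. \<psi> ((2 * a * x) * y)) = (if x = 0 then of_nat CARD('a) else 0)"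
      using assms two_neq_zero by (simp add: sum_psi_mult psi_0)
  qed
  finally show ?thesis by simp
qed

lemma gauss_sum_1_square: "gauss_sum 1 ^ 2 = quad_char (-1::'a) * of_nat CARD('a)"
proof -
  have "quad_char (-1::'a) * gauss_sum 1 ^ 2 = of_nat CARD('a)"
    using gauss_sum_mult_uminus[of 1] gauss_sum_scale[of "-1"] by (simp add: power2_eq_square ac_simps)
  moreover have "quad_char (-1::'a) * quad_char (-1::'a) = (1::complex)"
    by (simp add: quad_char_def)
  ultimately show ?thesis by (metis mult.assoc mult_1)
qed

lemma gauss_sum_mult:
  assumes "a \<noteq> 0" "b \<noteq> 0"
  shows "gauss_sum a * gauss_sum b = quad_char (- (a * b)) * of_nat CARD('a)"
proof -
  have "gauss_sum a * gauss_sum b = quad_char a * quad_char b * gauss_sum 1 ^ 2"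
    using gauss_sum_scale[OF assms(1)] gauss_sum_scale[OF assms(2)] by (simp add: power2_eq_square)
  also have "\<dots> = quad_char ((a * b) * (-1)) * of_nat CARD('a)"
    unfolding gauss_sum_1_square quad_char_mult[OF odd_card] by (simp only: mult.assoc)
  finally show ?thesis by simp
qed

lemma norm_gauss_sum:
  assumes "a \<noteq> 0"
  shows "cmod (gauss_sum a) = sqrt (real CARD('a))"
proof -
  have "cnj (gauss_sum a) = gauss_sum (- a)"
    unfolding gauss_sum_def by (simp add: cnj_psi)
  hence "complex_of_real (cmod (gauss_sum a) ^ 2) = of_nat CARD('a)"
    using complex_norm_square gauss_sum_mult_uminus[OF assms] by metis
  hence "cmod (gauss_sum a) ^ 2 = real CARD('a)"
    by (metis of_real_eq_iff of_real_of_nat_eq)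
  thus ?thesis by (simp add: real_sqrt_unique)
qed

lemma norm_quad_gauss_sum_le: "cmod (quad_gauss_sum c) \<le> sqrt (real CARD('a))"
  by (cases "c = 0") (simp_all add: quad_gauss_sum_0 norm_gauss_sum gauss_sum_eq_quad_gauss_sum[symmetric])

lemma gauss_sum_power_even:
  assumes "\<sigma> \<noteq> 0" "even m"
  shows "gauss_sum \<sigma> ^ m = (quad_char (-1::'a) * of_nat CARD('a)) ^ (m div 2)"
proof -
  have "gauss_sum \<sigma> ^ 2 = quad_char (-1 * \<sigma>^2) * of_nat CARD('a)"
    using gauss_sum_mult[OF assms(1) assms(1)] by (simp add: power2_eq_square)
  also have "\<dots> = quad_char (-1::'a) * of_nat CARD('a)"
    using assms(1) quad_char_mult[OF odd_card, of "-1" "\<sigma>^2"] by (simp add: quad_char_square)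
  finally show ?thesis using assms(2) by (metis dvd_mult_div_cancel power_mult)
qed

lemma sum_quad_char_psi_inverse:
  "(\<Sum>s\<in>UNIV - {0}. quad_char s * \<psi> (c * inverse s)) = quad_gauss_sum c"
proof -
  have "(\<Sum>s\<in>UNIV - {0}. quad_char s * \<psi> (c * inverse s))
      = (\<Sum>s\<in>UNIV - {0}. quad_char (inverse s) * \<psi> (c * inverse s))"
    by (simp add: quad_char_inverse[OF odd_card])
  also have "\<dots> = (\<Sum>s\<in>UNIV - {0}. quad_char s * \<psi> (c * s))"
    by (rule sum_inverse_nonzero)
  finally show ?thesis by (simp add: quad_gauss_sum_def sum_diff1)
qed

lemma sum_psi_quadratic:
  assumes "a \<noteq> 0"
  shows "(\<Sum>x\<in>UNIV. \<psi> (a * x^2 + b * x)) = \<psi> (- (b^2) / (4 * a)) * gauss_sum a"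
proof -
  define c where "c = b / (2 * a)"
  have "2 * a * c = b" "a * c^2 = b^2 / (4 * a)"
    unfolding c_def using assms two_neq_zero four_neq_zero by (simp_all add: power2_eq_square field_simps)
  hence "a * x^2 + b * x = a * (x + c)^2 + (- (b^2) / (4 * a))" for x
    by (simp add: power2_eq_square algebra_simps)
  hence "(\<Sum>x\<in>UNIV. \<psi> (a * x^2 + b * x)) = (\<Sum>x\<in>UNIV. \<psi> (a * (x + c)^2) * \<psi> (- (b^2) / (4 * a)))"
    by (simp only: psi_add)
  also have "\<dots> = (\<Sum>x\<in>UNIV. \<psi> (a * x^2) * \<psi> (- (b^2) / (4 * a)))"
    by (rule sum_shift_UNIV)
  finally show ?thesis
    unfolding gauss_sum_def by (simp add: sum_distrib_right mult.commute)
qed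

end

section \<open>Elementary estimates\<close>

text \<open>In the following real inequalities \<open>Q\<close>, \<open>N\<close>, \<open>e\<close> stand for \<open>q\<close>, \<open>q\<^bsup>d/2\<^esup>\<close>, \<open>|E|\<close>, and
  \<open>T\<close>, \<open>N0\<close>, \<open>Z\<close>, \<open>W\<close> for \<open>dilation_count\<close>, \<open>null_pair_count\<close>, \<open>null_fourier_mass\<close> and
  \<open>dilated_fourier_energy\<close>.\<close>

lemma even_dim_cross_term_bound:
  fixes Q N e g Z :: real
  assumes Q: "Q \<ge> 1" and N: "N > 0" and e: "e \<ge> N" and g: "g = N \<or> g = - N"
    and Z: "0 \<le> Z" "Z \<le> N^2 * e"
  shows "N^2 * Q * Z - e * (g * (Q * Z - N^2 * e)) \<ge> - (Q * N^2 * N * e^2)"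
  using g
proof
  assume "g = N"
  hence "N^2 * Q * Z - e * (g * (Q * Z - N^2 * e)) = N * N^2 * e^2 - Q * Z * (N * e - N^2)"
    by (simp add: power2_eq_square algebra_simps)
  moreover have "Q * Z * (N * e - N^2) \<le> Q * (N^2 * e) * (N * e - N^2)"
    using Z Q N e by (intro mult_right_mono mult_left_mono) (auto simp: power2_eq_square)
  moreover have "Q * (N^2 * e) * (N * e - N^2) \<le> Q * N^2 * N * e^2"
    using Q N e by (simp add: power2_eq_square algebra_simps)
  moreover have "N * N^2 * e^2 \<ge> 0" using N by simp
  ultimately show ?thesis by linarith
next
  assume "g = - N"
  hence "N^2 * Q * Z - e * (g * (Q * Z - N^2 * e)) = Q * Z * (N^2 + N * e) - N * N^2 * e^2"
    by (simp add: power2_eq_square algebra_simps)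
  moreover have "Q * Z * (N^2 + N * e) \<ge> 0" using Q Z N e by simp
  moreover have "N * N^2 * e^2 \<le> Q * N^2 * N * e^2"
    using mult_right_mono[OF Q, of "N * N^2 * e^2"] N by (simp add: ac_simps)
  ultimately show ?thesis by linarith
qed

lemma even_dim_excess_lower_bound:
  fixes Q N e g Z W T N0 :: real
  assumes Q: "Q \<ge> 1" and N: "N > 0" and e: "e \<ge> N" and g: "g = N \<or> g = - N"
    and Z: "0 \<le> Z" "Z \<le> N^2 * e" "Z^2 \<le> W"
    and T_eq: "N^2 * (Q * T) = N^2 * e^4 + Q * W - (N^2 * e)^2"
    and N0_eq: "N^2 * (Q * N0) = N^2 * e^2 + g * (Q * Z - N^2 * e)"
  shows "Q^2 * (T - N0^2) \<ge> (Q - 1) * e^4 - (Q + 1) * N^2 * e^2 - 2 * Q * N * e^3"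
proof -
  define D where "D = N^2"
  define u where "u = g * (Q * Z - D * e)"
  have D: "D > 0" unfolding D_def using N by simp
  have e0: "e > 0" using e N by simp
  have "D^2 * (Q^2 * (T - N0^2)) = D * Q * (D * (Q * T)) - (D * (Q * N0))^2"
    by (simp add: power2_eq_square algebra_simps)
  also have "\<dots> = D * Q * (D * e^4 + Q * W - (D * e)^2) - (D * e^2 + u)^2"
    using T_eq N0_eq unfolding D_def u_def by simp
  also have "\<dots> = D^2 * ((Q - 1) * e^4 - Q * D * e^2 - D * e^2) + 2 * D * e * (D * Q * Z - e * u)
      + D * Q^2 * (W - Z^2) - (u^2 - D * (Q * Z - D * e)^2)"
    by (simp add: power2_eq_square power3_eq_cube power4_eq_xxxx algebra_simps)
  also have "u^2 = D * (Q * Z - D * e)^2"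
    using g unfolding u_def D_def by (auto simp: power_mult_distrib)
  finally have expand: "D^2 * (Q^2 * (T - N0^2))
      = D^2 * ((Q - 1) * e^4 - Q * D * e^2 - D * e^2) + 2 * D * e * (D * Q * Z - e * u) + D * Q^2 * (W - Z^2)"
    by simp
  have "2 * D * e * (D * Q * Z - e * u) \<ge> 2 * D * e * (- (Q * D * N * e^2))"
    using even_dim_cross_term_bound[OF Q N e g Z(1,2)] D e0
    unfolding u_def D_def by (intro mult_left_mono) auto
  moreover have "D * Q^2 * (W - Z^2) \<ge> 0" using Z D by simp
  ultimately have "D^2 * (Q^2 * (T - N0^2)) \<ge> D^2 * ((Q - 1) * e^4 - (Q + 1) * D * e^2 - 2 * Q * N * e^3)"
    unfolding expand by (simp add: power2_eq_square power3_eq_cube algebra_simps)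
  moreover have "D^2 > 0" using D by simp
  ultimately show ?thesis unfolding D_def by (simp only: mult_le_cancel_left_pos)
qed

lemma even_dim_excess_positive:
  fixes Q N e k :: real
  assumes Q: "Q \<ge> 3" and N: "N \<ge> Q" and e: "e \<ge> (3 * k + 1) * N" and k: "k \<ge> 1"
  shows "(Q - 1) * e^4 - (Q + 1) * N^2 * e^2 - 2 * Q * N * e^3 > 2 * (k - 1) * Q^2 * e^3"
proof -
  have N0: "N > 0" using Q N by simp
  have "4 * N \<le> (3 * k + 1) * N" using k N0 by (intro mult_right_mono) auto
  hence e4: "e \<ge> 4 * N" using e by linarith
  have e0: "e > 0" using e4 N0 by simp
  have "(Q - 1) * e^2 \<ge> (Q - 1) * ((3 * k + 1) * N) * e"
    using e Q e0 by (simp add: power2_eq_square mult_left_mono mult_right_mono)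
  moreover have "(Q + 1) * N^2 \<le> (Q + 1) * N * e / 4"
    using e4 Q N0 by (simp add: power2_eq_square mult_left_mono)
  moreover have "Q * Q \<le> Q * N" using N Q by (intro mult_left_mono) auto
  hence "2 * (k - 1) * Q^2 * e \<le> 2 * (k - 1) * Q * N * e"
    using mult_left_mono[of "Q * Q" "Q * N" "2 * (k - 1) * e"] k e0 by (simp add: power2_eq_square ac_simps)
  moreover have "N * e * (k * (Q - 3) + (3 * Q - 5) / 4) > 0"
    using N0 e0 Q k by (intro mult_pos_pos) (auto intro: add_nonneg_pos)
  moreover have "(Q - 1) * ((3 * k + 1) * N) * e - (Q + 1) * N * e / 4 - 2 * Q * N * e
      - 2 * (k - 1) * Q * N * e = N * e * (k * (Q - 3) + (3 * Q - 5) / 4)"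
    by (simp add: field_simps)
  ultimately have "(Q - 1) * e^2 - (Q + 1) * N^2 - 2 * Q * N * e - 2 * (k - 1) * Q^2 * e > 0"
    by linarith
  hence "e^2 * ((Q - 1) * e^2 - (Q + 1) * N^2 - 2 * Q * N * e - 2 * (k - 1) * Q^2 * e) > 0"
    using e0 by simp
  thus ?thesis by (simp add: power2_eq_square power3_eq_cube power4_eq_xxxx algebra_simps)
qed

lemma odd_dim_excess_lower_bound:
  fixes Q N e W T N0 B :: real
  assumes Q: "Q \<ge> 0" and N: "N > 0" and W: "W \<ge> 0" and N0: "N0 \<ge> 0"
    and T_eq: "N^2 * (Q * T) = N^2 * e^4 + Q * W - (N^2 * e)^2"
    and N0_bound: "\<bar>Q * N0 - e^2\<bar> \<le> B"
  shows "Q^2 * (T - N0^2) \<ge> Q * (e^4 - N^2 * e^2) - (e^2 + B)^2"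
proof -
  have "N^2 * (Q * T) \<ge> N^2 * (e^4 - N^2 * e^2)"
    using T_eq Q W by (simp add: power2_eq_square algebra_simps)
  hence "Q * T \<ge> e^4 - N^2 * e^2" using N by simp
  hence "Q * (Q * T) \<ge> Q * (e^4 - N^2 * e^2)" using Q by (rule mult_left_mono)
  moreover have "(Q * N0)^2 \<le> (e^2 + B)^2"
    using N0_bound N0 Q by (intro power_mono) auto
  moreover have "Q^2 * (T - N0^2) = Q * (Q * T) - (Q * N0)^2"
    by (simp add: power2_eq_square algebra_simps)
  ultimately show ?thesis by linarith
qed

lemma odd_dim_excess_positive:
  fixes Q N e k :: real
  assumes Q: "Q \<ge> 3" and N: "N \<ge> Q * sqrt Q"
    and e: "e \<ge> 4 * N" "e \<ge> (2 + sqrt 3 * k) * N" and k: "k \<ge> 1"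
  shows "Q * (e^4 - N^2 * e^2) - (e^2 + N * sqrt Q * e)^2 > 2 * (k - 1) * Q^2 * e^3"
proof -
  define s where "s = sqrt Q"
  have s: "s \<ge> sqrt 3" "s * s = Q" "N \<ge> Q * s" unfolding s_def using Q N by auto
  have "sqrt 3 > (0::real)" by simp
  hence s0: "s > 0" using s(1) by linarith
  have "Q * s > 0" using Q s0 by simp
  hence N0: "N > 0" using s(3) by linarith
  have e0: "e > 0" using e(1) N0 by simp
  have "e - sqrt 3 * k * N \<ge> 2 * N" using e(2) by (simp add: algebra_simps)
  hence "e * (e - sqrt 3 * k * N) \<ge> (4 * N) * (2 * N)"
    using e(1) N0 by (intro mult_mono) auto
  hence F1: "(2/3) * Q * (e * (e - sqrt 3 * k * N)) \<ge> (2/3) * Q * (8 * N^2)"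
    using Q by (intro mult_left_mono) (auto simp: power2_eq_square)
  have F2: "(Q - 1) * e^2 \<ge> (2/3) * Q * e^2"
    using Q by (intro mult_right_mono) auto
  have "3 \<le> sqrt 3 * s" using mult_left_mono[OF s(1), of "sqrt 3"] by simp
  hence "(2/3) * s * 3 \<le> (2/3) * s * (sqrt 3 * s)" using s0 by (intro mult_left_mono) auto
  hence "2 * s \<le> (2/3) * sqrt 3 * Q" unfolding s(2)[symmetric] by (simp add: ac_simps)
  hence F3: "2 * k * s * N * e \<le> (2/3) * sqrt 3 * Q * k * N * e"
    using mult_right_mono[of "2 * s" _ "k * N * e"] k N0 e0 by (simp add: ac_simps)
  have "Q * Q \<le> s * N"
    using mult_left_mono[OF s(3), of s] s0 unfolding s(2)[symmetric] by (simp add: ac_simps)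
  hence F4: "2 * (k - 1) * Q^2 * e \<le> 2 * (k - 1) * (s * N) * e"
    using mult_left_mono[of "Q * Q" "s * N" "2 * (k - 1) * e"] k e0 by (simp add: power2_eq_square ac_simps)
  have "(Q - 1) * e^2 - 2 * Q * N^2 - 2 * N * s * e - 2 * (k - 1) * (s * N) * e
      = ((Q - 1) * e^2 - (2/3) * Q * e^2)
        + ((2/3) * Q * (e * (e - sqrt 3 * k * N)) - (2/3) * Q * (8 * N^2))
        + ((2/3) * sqrt 3 * Q * k * N * e - 2 * k * s * N * e) + (10/3) * (Q * N^2)"
    by (simp add: field_simps power2_eq_square)
  moreover have "Q * N^2 > 0" using Q N0 by simp
  ultimately have "(Q - 1) * e^2 - 2 * Q * N^2 - 2 * N * s * e - 2 * (k - 1) * Q^2 * e > 0"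
    using F1 F2 F3 F4 by linarith
  hence "e^2 * ((Q - 1) * e^2 - 2 * Q * N^2 - 2 * N * s * e - 2 * (k - 1) * Q^2 * e) > 0"
    using e0 by simp
  thus ?thesis unfolding s_def[symmetric]
    using s(2) by (simp add: power2_eq_square power3_eq_cube power4_eq_xxxx algebra_simps)
qed

lemma powr_half_eq_sqrt_power:
  fixes x :: real
  assumes "x > 0"
  shows "x powr (real n / 2) = sqrt x ^ n"
proof -
  have "x powr (real n / 2) = (x powr (1/2)) powr real n" by (simp add: powr_powr)
  thus ?thesis using assms by (simp add: powr_half_sqrt powr_realpow)
qed

lemma star_thresholds_le:
  assumes "k \<ge> 2"
  shows "3 * real k + 1 \<le> 31 + 10 * real (k choose 2)"
    and "2 + sqrt 3 * real k \<le> 4 + sqrt 3 * real (k choose 2)"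
proof -
  have "2 * (k - 1) div 2 \<le> k * (k - 1) div 2"
    using assms by (intro div_le_mono mult_right_mono) auto
  hence C: "real k - 1 \<le> real (k choose 2)" using assms by (simp add: choose_two)
  thus "3 * real k + 1 \<le> 31 + 10 * real (k choose 2)" by simp
  have "sqrt 3 \<le> (2::real)" by (rule real_le_lsqrt) auto
  with mult_left_mono[OF C, of "sqrt 3"]
  show "2 + sqrt 3 * real k \<le> 4 + sqrt 3 * real (k choose 2)" by (simp add: algebra_simps)
qed

section \<open>Counting dilated quadruples\<close>

context odd_add_char
begin

text \<open>Fourier expansion of \<open>t \<mapsto> \<psi> (s t\<^sup>2)\<close>, obtained by completing the square.\<close>

lemma psi_square_expand:
  assumes "s \<noteq> 0"
  shows "of_nat CARD('a) * \<psi> (s * t^2) = gauss_sum s * (\<Sum>a\<in>UNIV. \<psi> (- (a^2) / (4 * s)) * \<psi> (a * t))"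
proof -
  define b where "b = - 1 / (4 * s)"
  have b: "b \<noteq> 0" unfolding b_def using assms four_neq_zero by simp
  have "(\<Sum>a\<in>UNIV. \<psi> (- (a^2) / (4 * s)) * \<psi> (a * t)) = (\<Sum>a\<in>UNIV. \<psi> (b * a^2 + t * a))"
    unfolding b_def by (intro sum.cong refl) (simp add: psi_add[symmetric] mult.commute)
  also have "\<dots> = \<psi> (- (t^2) / (4 * b)) * gauss_sum b"
    by (rule sum_psi_quadratic[OF b])
  also have "- (t^2) / (4 * b) = s * t^2"
    unfolding b_def using assms four_neq_zero by (simp add: field_simps)
  finally have expand: "(\<Sum>a\<in>UNIV. \<psi> (- (a^2) / (4 * s)) * \<psi> (a * t)) = \<psi> (s * t^2) * gauss_sum b" .
  have "- (s * b) = (inverse 2)^2"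
    unfolding b_def using assms four_neq_zero two_neq_zero by (simp add: field_simps power2_eq_square)
  hence "gauss_sum s * gauss_sum b = of_nat CARD('a)"
    using gauss_sum_mult[OF assms b] quad_char_square[of "inverse (2::'a)"] two_neq_zero by simp
  thus ?thesis unfolding expand by (simp add: ac_simps)
qed

lemma psi_sqnorm_expand:
  fixes v :: "'a ^ 'n::finite"
  assumes "s \<noteq> 0"
  shows "of_nat CARD('a) ^ CARD('n) * \<psi> (s * sqnorm v)
       = gauss_sum s ^ CARD('n) * (\<Sum>\<xi>\<in>UNIV. \<psi> (- sqnorm \<xi> / (4 * s)) * \<psi> (dotp \<xi> v))"
proof -
  have "of_nat CARD('a) ^ CARD('n) * \<psi> (s * sqnorm v)
      = (\<Prod>i\<in>(UNIV::'n set). of_nat CARD('a) * \<psi> (s * (v $ i)^2))"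
    unfolding sqnorm_def by (simp add: sum_distrib_left psi_sum prod.distrib)
  also have "\<dots> = (\<Prod>i\<in>(UNIV::'n set). gauss_sum s * (\<Sum>a\<in>UNIV. \<psi> (- (a^2) / (4 * s)) * \<psi> (a * v $ i)))"
    by (simp add: psi_square_expand[OF assms])
  also have "\<dots> = gauss_sum s ^ CARD('n) *
      (\<Sum>\<xi>\<in>(UNIV :: ('a ^ 'n) set). \<Prod>i\<in>UNIV. \<psi> (- ((\<xi> $ i)^2) / (4 * s)) * \<psi> (\<xi> $ i * v $ i))"
    by (simp add: prod.distrib prod_sum_vec)
  also have "\<dots> = gauss_sum s ^ CARD('n) * (\<Sum>\<xi>\<in>UNIV. \<psi> (- sqnorm \<xi> / (4 * s)) * \<psi> (dotp \<xi> v))"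
    unfolding sqnorm_def dotp_def
    by (simp add: prod.distrib psi_sum sum_divide_distrib sum_negf[symmetric])
  finally show ?thesis .
qed

lemma sqnorm_char_sum_fourier:
  fixes E :: "('a ^ 'n::finite) set"
  assumes "s \<noteq> 0"
  shows "of_nat CARD('a) ^ CARD('n) * sqnorm_char_sum E s
       = gauss_sum s ^ CARD('n) * (\<Sum>\<xi>\<in>UNIV. \<psi> (- sqnorm \<xi> / (4 * s)) * of_real (fourier_sq E \<xi>))"
proof -
  have "of_nat CARD('a) ^ CARD('n) * sqnorm_char_sum E s = (\<Sum>x\<in>E. \<Sum>y\<in>E.
      gauss_sum s ^ CARD('n) * (\<Sum>\<xi>\<in>UNIV. \<psi> (- sqnorm \<xi> / (4 * s)) * \<psi> (dotp \<xi> (x - y))))"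
    unfolding sqnorm_char_sum_def by (simp add: sum_distrib_left psi_sqnorm_expand[OF assms])
  also have "\<dots> = gauss_sum s ^ CARD('n) *
      (\<Sum>\<xi>\<in>UNIV. \<psi> (- sqnorm \<xi> / (4 * s)) * (\<Sum>x\<in>E. \<Sum>y\<in>E. \<psi> (dotp \<xi> (x - y))))"
    by (simp add: sum_distrib_left sum.swap[of _ UNIV] mult.assoc)
  finally show ?thesis by (simp add: of_real_fourier_sq)
qed

lemma sqnorm_char_sum_pair_fourier:
  fixes E :: "('a ^ 'n::finite) set"
  assumes \<sigma>: "\<sigma> \<noteq> 0" and r: "r \<noteq> 0" and "quad_char r ^ CARD('n) = (1::complex)"
  shows "of_nat CARD('a) ^ CARD('n) * (sqnorm_char_sum E (- (\<sigma> * r)) * sqnorm_char_sum E \<sigma>)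
     = (\<Sum>\<xi>\<in>UNIV. \<Sum>\<eta>\<in>UNIV. \<psi> (((sqnorm \<xi> / r - sqnorm \<eta>) / 4) * inverse \<sigma>)
          * of_real (fourier_sq E \<xi> * fourier_sq E \<eta>))"
proof -
  let ?Q = "of_nat CARD('a) ^ CARD('n) :: complex"
  have \<sigma>r: "- (\<sigma> * r) \<noteq> 0" using \<sigma> r by simp
  have "gauss_sum (- (\<sigma> * r)) * gauss_sum \<sigma> = quad_char (r * \<sigma>^2) * of_nat CARD('a)"
    using gauss_sum_mult[OF \<sigma>r \<sigma>] by (simp add: power2_eq_square ac_simps)
  also have "quad_char (r * \<sigma>^2) = (quad_char r :: complex)"
    using \<sigma> by (simp add: quad_char_mult[OF odd_card] quad_char_square)
  finally have "(gauss_sum (- (\<sigma> * r)) * gauss_sum \<sigma>) ^ CARD('n) = ?Q"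
    using assms(3) by (simp add: power_mult_distrib)
  have "?Q * ?Q * (sqnorm_char_sum E (- (\<sigma> * r)) * sqnorm_char_sum E \<sigma>)
      = (?Q * sqnorm_char_sum E (- (\<sigma> * r))) * (?Q * sqnorm_char_sum E \<sigma>)"
    by (simp only: ac_simps)
  also have "\<dots> = (gauss_sum (- (\<sigma> * r)) * gauss_sum \<sigma>) ^ CARD('n) *
      ((\<Sum>\<xi>\<in>UNIV. \<psi> (- sqnorm \<xi> / (4 * - (\<sigma> * r))) * of_real (fourier_sq E \<xi>)) *
       (\<Sum>\<eta>\<in>UNIV. \<psi> (- sqnorm \<eta> / (4 * \<sigma>)) * of_real (fourier_sq E \<eta>)))"
    unfolding sqnorm_char_sum_fourier[OF \<sigma>r] sqnorm_char_sum_fourier[OF \<sigma>]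
    by (simp only: power_mult_distrib ac_simps)
  also note \<open>(gauss_sum (- (\<sigma> * r)) * gauss_sum \<sigma>) ^ CARD('n) = ?Q\<close>
  also have "(\<Sum>\<xi>\<in>UNIV. \<psi> (- sqnorm \<xi> / (4 * - (\<sigma> * r))) * of_real (fourier_sq E \<xi>)) *
      (\<Sum>\<eta>\<in>UNIV. \<psi> (- sqnorm \<eta> / (4 * \<sigma>)) * of_real (fourier_sq E \<eta>))
    = (\<Sum>\<xi>\<in>UNIV. \<Sum>\<eta>\<in>UNIV. \<psi> (((sqnorm \<xi> / r - sqnorm \<eta>) / 4) * inverse \<sigma>)
          * of_real (fourier_sq E \<xi> * fourier_sq E \<eta>))"
    unfolding sum_product
  proof (intro sum.cong refl)
    fix \<xi> \<eta> :: "'a ^ 'n"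
    have "- sqnorm \<xi> / (4 * - (\<sigma> * r)) + - sqnorm \<eta> / (4 * \<sigma>)
        = ((sqnorm \<xi> / r - sqnorm \<eta>) / 4) * inverse \<sigma>"
      using \<sigma> r four_neq_zero by (simp add: field_simps)
    hence psi_prod: "\<psi> (- sqnorm \<xi> / (4 * - (\<sigma> * r))) * \<psi> (- sqnorm \<eta> / (4 * \<sigma>))
        = \<psi> (((sqnorm \<xi> / r - sqnorm \<eta>) / 4) * inverse \<sigma>)"
      by (simp only: psi_add[symmetric])
    thus "\<psi> (- sqnorm \<xi> / (4 * - (\<sigma> * r))) * of_real (fourier_sq E \<xi>) *
        (\<psi> (- sqnorm \<eta> / (4 * \<sigma>)) * of_real (fourier_sq E \<eta>))
      = \<psi> (((sqnorm \<xi> / r - sqnorm \<eta>) / 4) * inverse \<sigma>) * of_real (fourier_sq E \<xi> * fourier_sq E \<eta>)"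
      unfolding of_real_mult by (simp only: ac_simps flip: psi_prod)
  qed
  finally show ?thesis by simp
qed

lemma sum_nonzero_sqnorm_char_sum_pairs:
  fixes E :: "('a ^ 'n::finite) set"
  assumes r: "r \<noteq> 0" and "quad_char r ^ CARD('n) = (1::complex)"
  shows "of_nat CARD('a) ^ CARD('n) *
           (\<Sum>\<sigma>\<in>UNIV - {0}. sqnorm_char_sum E (- (\<sigma> * r)) * sqnorm_char_sum E \<sigma>)
       = of_nat CARD('a) * of_real (dilated_fourier_energy E r) - (of_nat CARD('a) ^ CARD('n) * of_nat (card E))^2"
proof -
  let ?F = "\<lambda>\<xi>. of_real (fourier_sq E \<xi>) :: complex"
  let ?c = "\<lambda>\<xi> \<eta>. (sqnorm \<xi> / r - sqnorm \<eta>) / 4"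
  have "of_nat CARD('a) ^ CARD('n) *
           (\<Sum>\<sigma>\<in>UNIV - {0}. sqnorm_char_sum E (- (\<sigma> * r)) * sqnorm_char_sum E \<sigma>)
      = (\<Sum>\<sigma>\<in>UNIV - {0}. \<Sum>\<xi>\<in>UNIV. \<Sum>\<eta>\<in>UNIV. \<psi> (?c \<xi> \<eta> * inverse \<sigma>) * of_real (fourier_sq E \<xi> * fourier_sq E \<eta>))"
    unfolding sum_distrib_left
    by (rule sum.cong[OF refl], rule sqnorm_char_sum_pair_fourier) (use r assms(2) in auto)
  also have "\<dots> = (\<Sum>\<xi>\<in>UNIV. \<Sum>\<eta>\<in>UNIV.
      (\<Sum>\<sigma>\<in>UNIV - {0}. \<psi> (?c \<xi> \<eta> * inverse \<sigma>)) * of_real (fourier_sq E \<xi> * fourier_sq E \<eta>))"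
    unfolding sum_distrib_right by (rule trans[OF sum.swap sum.cong[OF refl sum.swap]])
  also have "\<dots> = (\<Sum>\<xi>\<in>UNIV. \<Sum>\<eta>\<in>UNIV.
      of_nat CARD('a) * of_real (if sqnorm \<xi> = r * sqnorm \<eta> then fourier_sq E \<xi> * fourier_sq E \<eta> else 0)
      - ?F \<xi> * ?F \<eta>)"
  proof (intro sum.cong refl)
    fix \<xi> \<eta> :: "'a ^ 'n"
    have c_eq_0: "?c \<xi> \<eta> = 0 \<longleftrightarrow> sqnorm \<xi> = r * sqnorm \<eta>"
      using r four_neq_zero by (auto simp: field_simps)
    show "(\<Sum>\<sigma>\<in>UNIV - {0}. \<psi> (?c \<xi> \<eta> * inverse \<sigma>)) * of_real (fourier_sq E \<xi> * fourier_sq E \<eta>)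
      = of_nat CARD('a) * of_real (if sqnorm \<xi> = r * sqnorm \<eta> then fourier_sq E \<xi> * fourier_sq E \<eta> else 0)
        - ?F \<xi> * ?F \<eta>"
      unfolding sum_psi_mult_inverse c_eq_0 by (simp add: left_diff_distrib)
  qed
  also have "\<dots> = of_nat CARD('a) * of_real (dilated_fourier_energy E r) - (\<Sum>\<xi>\<in>UNIV. ?F \<xi>)^2"
    unfolding power2_eq_square sum_product
    unfolding dilated_fourier_energy_def of_real_sum sum_distrib_left sum_subtractf ..
  also have "(\<Sum>\<xi>\<in>UNIV. ?F \<xi>) = of_nat CARD('a) ^ CARD('n) * of_nat (card E)"
    unfolding of_real_sum[symmetric] plancherel by simp
  finally show ?thesis .
qed

text \<open>Only \<open>\<sigma> = 0\<close> contributes the main term \<open>|E|\<^sup>4 / q\<close>; the other frequencies are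
  collected by orthogonality into the spectral energy of \<open>E\<close> on pairs \<open>\<parallel>\<xi>\<parallel> = r \<parallel>\<eta>\<parallel>\<close>.\<close>

lemma dilation_count_formula:
  fixes E :: "('a ^ 'n::finite) set"
  assumes r: "r \<noteq> 0" and "quad_char r ^ CARD('n) = (1::complex)"
  shows "real CARD('a) ^ CARD('n) * (real CARD('a) * dilation_count E r)
       = real CARD('a) ^ CARD('n) * real (card E) ^ 4 + real CARD('a) * dilated_fourier_energy E r
         - (real CARD('a) ^ CARD('n) * real (card E))^2"
proof -
  let ?Q = "of_nat CARD('a) ^ CARD('n) :: complex"
  let ?\<Sigma> = "\<Sum>\<sigma>\<in>UNIV - {0}. sqnorm_char_sum E (- (\<sigma> * r)) * sqnorm_char_sum E \<sigma>"
  have "of_nat CARD('a) * of_real (dilation_count E r) = of_nat (card E) ^ 4 + ?\<Sigma>"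
    unfolding dilation_count_char_sum
    by (simp add: sum.remove[of UNIV 0] sqnorm_char_sum_0 power_add[symmetric])
  hence "?Q * (of_nat CARD('a) * of_real (dilation_count E r)) = ?Q * of_nat (card E) ^ 4 + ?Q * ?\<Sigma>"
    by (simp only: distrib_left)
  also note sum_nonzero_sqnorm_char_sum_pairs[OF assms]
  finally have "of_real (real CARD('a) ^ CARD('n) * (real CARD('a) * dilation_count E r))
      = (of_real (real CARD('a) ^ CARD('n) * real (card E) ^ 4 + real CARD('a) * dilated_fourier_energy E r
         - (real CARD('a) ^ CARD('n) * real (card E))^2) :: complex)"
    by simp
  thus ?thesis by (simp only: of_real_eq_iff)
qed

lemma null_pair_count_fourier:
  fixes E :: "('a ^ 'n::finite) set"
  shows "of_nat CARD('a) ^ CARD('n) * (of_nat CARD('a) * of_real (null_pair_count E))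
     = of_nat CARD('a) ^ CARD('n) * of_nat (card E) ^ 2 + (\<Sum>\<sigma>\<in>UNIV - {0}. gauss_sum \<sigma> ^ CARD('n) *
         (\<Sum>\<xi>\<in>UNIV. \<psi> ((- sqnorm \<xi> / 4) * inverse \<sigma>) * of_real (fourier_sq E \<xi>)))"
proof -
  have "of_nat CARD('a) * of_real (null_pair_count E) = sqnorm_char_sum E 0 + (\<Sum>\<sigma>\<in>UNIV - {0}. sqnorm_char_sum E \<sigma>)"
    unfolding null_pair_count_char_sum by (simp add: sum.remove[of UNIV 0])
  moreover have "of_nat CARD('a) ^ CARD('n) * sqnorm_char_sum E \<sigma>
      = gauss_sum \<sigma> ^ CARD('n) * (\<Sum>\<xi>\<in>UNIV. \<psi> ((- sqnorm \<xi> / 4) * inverse \<sigma>) * of_real (fourier_sq E \<xi>))"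
    if "\<sigma> \<in> UNIV - {0}" for \<sigma>
  proof -
    have \<sigma>: "\<sigma> \<noteq> 0" using that by simp
    have "- sqnorm \<xi> / (4 * \<sigma>) = (- sqnorm \<xi> / 4) * inverse \<sigma>" for \<xi> :: "'a ^ 'n"
      using \<sigma> four_neq_zero by (simp add: field_simps)
    thus ?thesis using sqnorm_char_sum_fourier[OF \<sigma>, of E] by (simp only:)
  qed
  ultimately show ?thesis
    by (simp add: distrib_left sum_distrib_left sqnorm_char_sum_0)
qed

lemma null_pair_count_even_dim:
  fixes E :: "('a ^ 'n::finite) set"
  assumes "even CARD('n)"
  shows "real CARD('a) ^ CARD('n) * (real CARD('a) * null_pair_count E)
     = real CARD('a) ^ CARD('n) * real (card E) ^ 2 + (quad_char (-1::'a) * real CARD('a)) ^ (CARD('n) div 2)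
         * (real CARD('a) * null_fourier_mass E - real CARD('a) ^ CARD('n) * real (card E))"
proof -
  let ?g = "(quad_char (-1::'a) * of_nat CARD('a)) ^ (CARD('n) div 2) :: complex"
  let ?F = "\<lambda>\<xi>. of_real (fourier_sq E \<xi>) :: complex"
  have "(\<Sum>\<sigma>\<in>UNIV - {0}. gauss_sum \<sigma> ^ CARD('n) *
         (\<Sum>\<xi>\<in>UNIV. \<psi> ((- sqnorm \<xi> / 4) * inverse \<sigma>) * ?F \<xi>))
      = (\<Sum>\<sigma>\<in>UNIV - {0}. ?g * (\<Sum>\<xi>\<in>UNIV. \<psi> ((- sqnorm \<xi> / 4) * inverse \<sigma>) * ?F \<xi>))"
    by (intro sum.cong refl) (simp add: gauss_sum_power_even assms)
  also have "\<dots> = ?g * (\<Sum>\<xi>\<in>UNIV. (\<Sum>\<sigma>\<in>UNIV - {0}. \<psi> ((- sqnorm \<xi> / 4) * inverse \<sigma>)) * ?F \<xi>)"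
    unfolding sum_distrib_left[of ?g] sum_distrib_right by (rule sum.swap)
  also have "\<dots> = ?g * (\<Sum>\<xi>\<in>UNIV. of_nat CARD('a) * of_real (if sqnorm \<xi> = 0 then fourier_sq E \<xi> else 0) - ?F \<xi>)"
    unfolding sum_psi_mult_inverse
    by (intro arg_cong[where f = "(*) ?g"] sum.cong refl) (simp add: four_neq_zero left_diff_distrib)
  also have "\<dots> = ?g * (of_nat CARD('a) * of_real (null_fourier_mass E) - of_nat CARD('a) ^ CARD('n) * of_nat (card E))"
    unfolding null_fourier_mass_def of_real_sum sum_distrib_left sum_subtractf
    by (simp flip: of_real_sum add: plancherel)
  finally have "of_real (real CARD('a) ^ CARD('n) * (real CARD('a) * null_pair_count E))
     = (of_real (real CARD('a) ^ CARD('n) * real (card E) ^ 2 + (quad_char (-1::'a) * real CARD('a)) ^ (CARD('n) div 2)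
         * (real CARD('a) * null_fourier_mass E - real CARD('a) ^ CARD('n) * real (card E))) :: complex)"
    using null_pair_count_fourier[of E] by (simp add: of_real_quad_char)
  thus ?thesis by (simp only: of_real_eq_iff)
qed

text \<open>In odd dimension \<open>gauss_sum \<sigma> ^ d = quad_char \<sigma> * gauss_sum 1 ^ d\<close>, so the sum over \<open>\<sigma>\<close>
  produces the Gauss sums \<open>quad_gauss_sum\<close>, each of modulus at most \<open>\<surd>q\<close>.\<close>

lemma null_pair_count_odd_dim_eq:
  fixes E :: "('a ^ 'n::finite) set"
  assumes "odd CARD('n)"
  shows "of_real (real CARD('a) ^ CARD('n) * (real CARD('a) * null_pair_count E - real (card E) ^ 2))
       = gauss_sum 1 ^ CARD('n) * (\<Sum>\<xi>\<in>UNIV. quad_gauss_sum (- sqnorm \<xi> / 4) * of_real (fourier_sq E \<xi>))"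
proof -
  let ?F = "\<lambda>\<xi>. of_real (fourier_sq E \<xi>) :: complex"
  let ?c = "\<lambda>\<xi>::'a ^ 'n. - sqnorm \<xi> / 4"
  have "of_real (real CARD('a) ^ CARD('n) * (real CARD('a) * null_pair_count E - real (card E) ^ 2))
      = of_nat CARD('a) ^ CARD('n) * (of_nat CARD('a) * of_real (null_pair_count E))
        - of_nat CARD('a) ^ CARD('n) * of_nat (card E) ^ 2"
    by (simp add: right_diff_distrib)
  also have "\<dots> = (\<Sum>\<sigma>\<in>UNIV - {0}. gauss_sum \<sigma> ^ CARD('n) * (\<Sum>\<xi>\<in>UNIV. \<psi> (?c \<xi> * inverse \<sigma>) * ?F \<xi>))"
    using null_pair_count_fourier[of E] by simp
  also have "\<dots> = (\<Sum>\<sigma>\<in>UNIV - {0}. gauss_sum 1 ^ CARD('n) *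
           (\<Sum>\<xi>\<in>UNIV. (quad_char \<sigma> * \<psi> (?c \<xi> * inverse \<sigma>)) * ?F \<xi>))"
  proof (intro sum.cong refl)
    fix \<sigma> :: 'a assume "\<sigma> \<in> UNIV - {0}"
    hence "gauss_sum \<sigma> ^ CARD('n) = quad_char \<sigma> * gauss_sum 1 ^ CARD('n)"
      using gauss_sum_scale[of \<sigma>] by (simp add: power_mult_distrib quad_char_pow_odd assms)
    thus "gauss_sum \<sigma> ^ CARD('n) * (\<Sum>\<xi>\<in>UNIV. \<psi> (?c \<xi> * inverse \<sigma>) * ?F \<xi>)
        = gauss_sum 1 ^ CARD('n) * (\<Sum>\<xi>\<in>UNIV. (quad_char \<sigma> * \<psi> (?c \<xi> * inverse \<sigma>)) * ?F \<xi>)"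
      by (simp add: sum_distrib_left ac_simps)
  qed
  also have "\<dots> = gauss_sum 1 ^ CARD('n) *
      (\<Sum>\<xi>\<in>UNIV. (\<Sum>\<sigma>\<in>UNIV - {0}. quad_char \<sigma> * \<psi> (?c \<xi> * inverse \<sigma>)) * ?F \<xi>)"
    unfolding sum_distrib_left[of "gauss_sum 1 ^ CARD('n)"] sum_distrib_right by (rule sum.swap)
  finally show ?thesis by (simp only: sum_quad_char_psi_inverse)
qed

lemma null_pair_count_odd_dim:
  fixes E :: "('a ^ 'n::finite) set"
  assumes "odd CARD('n)"
  shows "\<bar>real CARD('a) * null_pair_count E - real (card E) ^ 2\<bar>
       \<le> sqrt (real CARD('a)) ^ CARD('n) * sqrt (real CARD('a)) * real (card E)"
proof -
  let ?Q = "real CARD('a) ^ CARD('n)"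
  let ?K = "\<Sum>\<xi>\<in>UNIV. quad_gauss_sum (- sqnorm \<xi> / 4) * of_real (fourier_sq E \<xi>)"
  have "?Q * \<bar>real CARD('a) * null_pair_count E - real (card E) ^ 2\<bar> = cmod (gauss_sum 1) ^ CARD('n) * cmod ?K"
    using arg_cong[OF null_pair_count_odd_dim_eq[OF assms, of E], of cmod]
    unfolding norm_of_real norm_mult norm_power abs_mult by simp
  also have "\<dots> \<le> sqrt (real CARD('a)) ^ CARD('n) * (\<Sum>\<xi>\<in>UNIV. sqrt (real CARD('a)) * fourier_sq E \<xi>)"
  proof (rule mult_mono)
    have "cmod ?K \<le> (\<Sum>\<xi>\<in>UNIV. cmod (quad_gauss_sum (- sqnorm \<xi> / 4)) * fourier_sq E \<xi>)"
      by (rule order_trans[OF norm_sum]) (simp add: norm_mult fourier_sq_nonneg)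
    also have "\<dots> \<le> (\<Sum>\<xi>\<in>UNIV. sqrt (real CARD('a)) * fourier_sq E \<xi>)"
      by (intro sum_mono mult_right_mono norm_quad_gauss_sum_le fourier_sq_nonneg)
    finally show "cmod ?K \<le> (\<Sum>\<xi>\<in>UNIV. sqrt (real CARD('a)) * fourier_sq E \<xi>)" .
  qed (simp_all add: norm_gauss_sum)
  also have "\<dots> = ?Q * (sqrt (real CARD('a)) ^ CARD('n) * sqrt (real CARD('a)) * real (card E))"
    by (simp add: sum_distrib_left[symmetric] plancherel)
  finally show ?thesis by simp
qed

lemma contains_star_pair_if_large_even_dim:
  fixes E :: "('a ^ 'n::finite) set"
  assumes d: "even CARD('n)" "CARD('n) \<ge> 2" and r: "r \<noteq> 0" and k: "k \<ge> 1"
    and large: "real (card E) \<ge> (3 * real k + 1) * sqrt (real CARD('a)) ^ CARD('n)"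
  shows "contains_star_pair E k r"
proof -
  let ?q = "real CARD('a)" and ?e = "real (card E)"
  define N where "N = sqrt ?q ^ CARD('n)"
  have q: "?q \<ge> 3" using card_ge_3_if_odd_card[OF odd_card] by simp
  have N0: "N > 0" using q unfolding N_def by simp
  have N_eq: "N = ?q ^ (CARD('n) div 2)"
    unfolding N_def using d(1) by (metis dvd_mult_div_cancel power_mult real_sqrt_pow2 of_nat_0_le_iff)
  hence N2: "?q ^ CARD('n) = N^2" using d(1) by (simp flip: power_mult)
  have "1 \<le> CARD('n) div 2" using d(2) by presburger
  hence "N \<ge> ?q" unfolding N_eq using power_increasing[of 1 _ ?q] q by simp
  have large: "?e \<ge> (3 * real k + 1) * N" using large unfolding N_def .
  moreover have "1 * N \<le> (3 * real k + 1) * N" using N0 by (intro mult_right_mono) auto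
  ultimately have "?e \<ge> N" by linarith
  define g where "g = (quad_char (-1::'a) * ?q) ^ (CARD('n) div 2)"
  have g: "g = N \<or> g = - N"
    unfolding g_def N_eq power_mult_distrib
    by (cases "even (CARD('n) div 2)") (auto simp: quad_char_def)
  have "quad_char r ^ CARD('n) = (1::complex)" by (rule quad_char_pow_even[OF r d(1)])
  from dilation_count_formula[OF r this, of E]
  have T_eq: "N^2 * (?q * dilation_count E r) = N^2 * ?e^4 + ?q * dilated_fourier_energy E r - (N^2 * ?e)^2"
    unfolding N2 .
  from null_pair_count_even_dim[OF d(1), of E]
  have N0_eq: "N^2 * (?q * null_pair_count E) = N^2 * ?e^2 + g * (?q * null_fourier_mass E - N^2 * ?e)"
    unfolding N2 g_def .
  have "?q^2 * (dilation_count E r - null_pair_count E ^ 2)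
      \<ge> (?q - 1) * ?e^4 - (?q + 1) * N^2 * ?e^2 - 2 * ?q * N * ?e^3"
    using q null_fourier_mass_le[of E] unfolding N2
    by (intro even_dim_excess_lower_bound[OF _ N0 \<open>?e \<ge> N\<close> g null_fourier_mass_nonneg _
          null_fourier_mass_square_le T_eq N0_eq]) simp_all
  moreover have "(?q - 1) * ?e^4 - (?q + 1) * N^2 * ?e^2 - 2 * ?q * N * ?e^3 > 2 * (real k - 1) * ?q^2 * ?e^3"
    using large k by (intro even_dim_excess_positive[OF q \<open>N \<ge> ?q\<close>]) simp_all
  ultimately have "?q^2 * (2 * (real k - 1) * ?e^3) < ?q^2 * (dilation_count E r - null_pair_count E ^ 2)"
    by (simp only: mult.left_commute[of "?q^2"])
  with \<open>?q \<ge> 3\<close> have "proper_dilation_count E r > 2 * (real k - 1) * ?e ^ 3"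
    unfolding proper_dilation_count_eq[OF r] by (simp only: mult_less_cancel_left_pos zero_less_power)
  thus ?thesis by (intro contains_star_pair_if_many_proper_dilations r k) simp
qed

lemma contains_star_pair_if_large_odd_dim:
  fixes E :: "('a ^ 'n::finite) set"
  assumes d: "odd CARD('n)" "CARD('n) \<ge> 3" and r: "r \<in> nonzero_squares" and k: "k \<ge> 1"
    and large: "real (card E) \<ge> 4 * sqrt (real CARD('a)) ^ CARD('n)"
      "real (card E) \<ge> (2 + sqrt 3 * real k) * sqrt (real CARD('a)) ^ CARD('n)"
  shows "contains_star_pair E k r"
proof -
  let ?q = "real CARD('a)" and ?e = "real (card E)"
  define N where "N = sqrt ?q ^ CARD('n)"
  have q: "?q \<ge> 3" using card_ge_3_if_odd_card[OF odd_card] by simp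
  have N0: "N > 0" using q unfolding N_def by simp
  have N2: "?q ^ CARD('n) = N^2"
    unfolding N_def by (simp flip: power_mult add: mult.commute[of _ 2] power_mult)
  have "sqrt ?q ^ 3 \<le> N" unfolding N_def using d(2) q by (intro power_increasing) auto
  hence "N \<ge> ?q * sqrt ?q" using q by (simp add: power3_eq_cube)
  obtain z where z: "z \<noteq> 0" "r = z^2" using r unfolding nonzero_squares_def by blast
  hence r0: "r \<noteq> 0" by simp
  have "quad_char r ^ CARD('n) = (1::complex)" using z by (simp add: quad_char_square)
  from dilation_count_formula[OF r0 this, of E]
  have T_eq: "N^2 * (?q * dilation_count E r) = N^2 * ?e^4 + ?q * dilated_fourier_energy E r - (N^2 * ?e)^2"
    unfolding N2 .
  have "\<bar>?q * null_pair_count E - ?e^2\<bar> \<le> N * sqrt ?q * ?e"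
    using null_pair_count_odd_dim[OF d(1), of E] unfolding N_def .
  hence "?q^2 * (dilation_count E r - null_pair_count E ^ 2)
      \<ge> ?q * (?e^4 - N^2 * ?e^2) - (?e^2 + N * sqrt ?q * ?e)^2"
    using q by (intro odd_dim_excess_lower_bound[OF _ N0 dilated_fourier_energy_nonneg
          null_pair_count_nonneg T_eq]) simp_all
  moreover have "?q * (?e^4 - N^2 * ?e^2) - (?e^2 + N * sqrt ?q * ?e)^2 > 2 * (real k - 1) * ?q^2 * ?e^3"
    using large k unfolding N_def[symmetric]
    by (intro odd_dim_excess_positive[OF q \<open>N \<ge> ?q * sqrt ?q\<close>]) simp_all
  ultimately have "?q^2 * (2 * (real k - 1) * ?e^3) < ?q^2 * (dilation_count E r - null_pair_count E ^ 2)"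
    by (simp only: mult.left_commute[of "?q^2"])
  with \<open>?q \<ge> 3\<close> have "proper_dilation_count E r > 2 * (real k - 1) * ?e ^ 3"
    unfolding proper_dilation_count_eq[OF r0] by (simp only: mult_less_cancel_left_pos zero_less_power)
  thus ?thesis by (intro contains_star_pair_if_many_proper_dilations r0 k) simp
qed

end

theorem theorem1p5:
  fixes E :: "(('a::{field, finite}) ^ 'n) set"
    and k :: nat and r :: 'a
  assumes "odd CARD('a)"
    and "CARD('n) \<ge> 2"
    and "k \<ge> 2"
  shows "(CARD('a) \<ge> 5 \<and> even CARD('n) \<and> r \<noteq> 0 \<and>
          real (card E) \<ge> (31 + 10 * real (k choose 2)) * real CARD('a) powr (real CARD('n) / 2)
          \<longrightarrow> contains_star_pair E k r)
       \<and> (odd CARD('n) \<and> CARD('n) \<ge> 3 \<and> r \<in> nonzero_squares \<and>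
          real (card E) \<ge> (4 + sqrt 3 * real (k choose 2)) * real CARD('a) powr (real CARD('n) / 2)
          \<longrightarrow> contains_star_pair E k r)"
proof -
  obtain \<psi> :: "'a \<Rightarrow> complex" where "\<forall>x y. \<psi> (x + y) = \<psi> x * \<psi> y" "\<forall>x. cmod (\<psi> x) = 1" "\<psi> 1 \<noteq> 1"
    using nontrivial_add_char_exists by blast
  then interpret odd_add_char \<psi> using assms(1) by unfold_locales auto
  define N where "N = sqrt (real CARD('a)) ^ CARD('n)"
  have N: "real CARD('a) powr (real CARD('n) / 2) = N" "N \<ge> 0"
    unfolding N_def by (simp_all add: powr_half_eq_sqrt_power)
  note thresholds = star_thresholds_le[OF assms(3), THEN mult_right_mono, OF N(2)]
  have k: "k \<ge> 1" using assms(3) by simp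
  show ?thesis
  proof (intro conjI impI; elim conjE)
    assume "CARD('a) \<ge> 5" and d: "even CARD('n)" and r: "r \<noteq> 0"
      and large: "real (card E) \<ge> (31 + 10 * real (k choose 2)) * real CARD('a) powr (real CARD('n) / 2)"
    have "real (card E) \<ge> (3 * real k + 1) * N" using large thresholds(1) unfolding N(1) by linarith
    thus "contains_star_pair E k r"
      unfolding N_def by (rule contains_star_pair_if_large_even_dim[OF d assms(2) r k])
  next
    assume d: "odd CARD('n)" "CARD('n) \<ge> 3" and r: "r \<in> nonzero_squares"
      and large: "real (card E) \<ge> (4 + sqrt 3 * real (k choose 2)) * real CARD('a) powr (real CARD('n) / 2)"
    have "4 * N \<le> (4 + sqrt 3 * real (k choose 2)) * N" using N(2) by (intro mult_right_mono) auto
    hence "real (card E) \<ge> 4 * N" "real (card E) \<ge> (2 + sqrt 3 * real k) * N"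
      using large thresholds(2) unfolding N(1) by linarith+
    thus "contains_star_pair E k r"
      unfolding N_def by (rule contains_star_pair_if_large_odd_dim[OF d r k])
  qed
qed

end
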